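(* Let $(\underline{\mathbf{v}},\underline{\boldsymbol{\rho}})$ be a subsolution and $(\overline{\mathbf{v}},\overline{\boldsymbol{\rho}})$ a supersolution of the system described in the context, both locally bounded in time, and assume that for all $j\in\mathbb{Z}$, $\underline{v}_j(0,x)\le\overline{v}_j(0,x)$ for all $x\in[0,1]$ and $\underline{\rho}_j(0)\le\overline{\rho}_j(0)$. Then $\underline{v}_j(t,x)\le\overline{v}_j(t,x)$ and $\underline{\rho}_j(t)\le\overline{\rho}_j(t)$ for all $t>0$, $x\in[0,1]$, $j\in\mathbb{Z}$. If furthermore $\underline{\mathbf{v}}(0)\not\equiv\overline{\mathbf{v}}(0)$ or $\underline{\boldsymbol{\rho}}(0)\not\equiv\overline{\boldsymbol{\rho}}(0)$, then $\underline{v}_j(t,x)<\overline{v}_j(t,x)$ and $\underline{\rho}_j(t)<\overline{\rho}_j(t)$ for all $t>0$, $x\in[0,1]$, $j\in\mathbb{Z}$.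
   Context: Fix $\alpha,\beta,d>0$ and $f\in\mathscr{C}^1([0,1])$ with $f(0)=f(1)=0$, $0<f(u)\le f'(0)u$ on $(0,1)$, extended to a locally Lipschitz function on $\mathbb{R}$ negative on $\mathbb{R}\setminus[0,1]$. A pair $(\mathbf{v},\boldsymbol{\rho})=(v_j,\rho_j)_{j\in\mathbb{Z}}$ is in the regularity class if for every $j$: $\rho_j\in\mathscr{C}^1([0,+\infty))$, $v_j\in\mathscr{C}^0([0,+\infty)\times[0,1])$, $\partial_tv_j,\partial_x^2v_j\in\mathscr{C}^0((0,+\infty)\times(0,1))$, $\partial_xv_j\in\mathscr{C}^0((0,+\infty)\times[0,1])$. Such a pair $(\overline{\mathbf{v}},\overline{\boldsymbol{\rho}})$ is a supersolution if for all $t>0$, $j\in\mathbb{Z}$: $\partial_t\overline{v}_j\ge d\,\partial_x^2\overline{v}_j$ on $(0,1)$; $\overline{\rho}_j'(t)\ge f(\overline{\rho}_j(t))+\alpha(\overline{v}_j(t,0)+\overline{v}_{j-1}(t,1))-2\beta\overline{\rho}_j(t)$; $-d\,\partial_x\overline{v}_j(t,0)+\alpha\overline{v}_j(t,0)\ge\beta\overline{\rho}_j(t)$; $d\,\partial_x\overline{v}_j(t,1)+\alpha\overline{v}_j(t,1)\ge\beta\overline{\rho}_{j+1}(t)$. A subsolution is defined in the same way with all these inequalities reversed. Locally bounded in time means that for every $T>0$, $\sup_{t\in[0,T],\,j\in\mathbb{Z},\,x\in[0,1]}(|v_j(t,x)|+|\rho_j(t)|)<\infty$. *)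

theory Defs
  imports "HOL-Analysis.Analysis"
begin

(* A pair (v, rho): v j t x = v_j(t,x), rho j t = rho_j(t), for j :: int. *)
definition reg_derivs ::
  "(int \<Rightarrow> real \<Rightarrow> real \<Rightarrow> real) \<Rightarrow> (int \<Rightarrow> real \<Rightarrow> real) \<Rightarrow>
   (int \<Rightarrow> real \<Rightarrow> real \<Rightarrow> real) \<Rightarrow> (int \<Rightarrow> real \<Rightarrow> real \<Rightarrow> real) \<Rightarrow>
   (int \<Rightarrow> real \<Rightarrow> real \<Rightarrow> real) \<Rightarrow> (int \<Rightarrow> real \<Rightarrow> real) \<Rightarrow> bool" where
  "reg_derivs v rho vt vx vxx drho \<longleftrightarrow>
    (\<forall>j. continuous_on {0..} (drho j) \<and>
         (\<forall>t\<ge>0. (rho j has_real_derivative drho j t) (at t within {0..}))) \<and>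
    (\<forall>j. continuous_on ({0..} \<times> {0..1}) (\<lambda>(t,x). v j t x)) \<and>
    (\<forall>j. continuous_on ({0<..} \<times> {0<..<1}) (\<lambda>(t,x). vt j t x) \<and>
         (\<forall>t>0. \<forall>x\<in>{0<..<1}. ((\<lambda>s. v j s x) has_real_derivative vt j t x) (at t))) \<and>
    (\<forall>j. continuous_on ({0<..} \<times> {0..1}) (\<lambda>(t,x). vx j t x) \<and>
         (\<forall>t>0. \<forall>x\<in>{0..1}. ((\<lambda>y. v j t y) has_real_derivative vx j t x) (at x within {0..1}))) \<and>
    (\<forall>j. continuous_on ({0<..} \<times> {0<..<1}) (\<lambda>(t,x). vxx j t x) \<and>
         (\<forall>t>0. \<forall>x\<in>{0<..<1}. ((\<lambda>y. vx j t y) has_real_derivative vxx j t x) (at x)))"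

definition regularity_class ::
  "(int \<Rightarrow> real \<Rightarrow> real \<Rightarrow> real) \<Rightarrow> (int \<Rightarrow> real \<Rightarrow> real) \<Rightarrow> bool" where
  "regularity_class v rho \<longleftrightarrow> (\<exists>vt vx vxx drho. reg_derivs v rho vt vx vxx drho)"

definition supersolution ::
  "real \<Rightarrow> real \<Rightarrow> real \<Rightarrow> (real \<Rightarrow> real) \<Rightarrow>
   (int \<Rightarrow> real \<Rightarrow> real \<Rightarrow> real) \<Rightarrow> (int \<Rightarrow> real \<Rightarrow> real) \<Rightarrow> bool" where
  "supersolution \<alpha> \<beta> d f v rho \<longleftrightarrow>
    (\<exists>vt vx vxx drho. reg_derivs v rho vt vx vxx drho \<and>
      (\<forall>t>0. \<forall>j.
         (\<forall>x\<in>{0<..<1}. vt j t x \<ge> d * vxx j t x) \<and>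
         drho j t \<ge> f (rho j t) + \<alpha> * (v j t 0 + v (j - 1) t 1) - 2 * \<beta> * rho j t \<and>
         - d * vx j t 0 + \<alpha> * v j t 0 \<ge> \<beta> * rho j t \<and>
         d * vx j t 1 + \<alpha> * v j t 1 \<ge> \<beta> * rho (j + 1) t))"

definition subsolution ::
  "real \<Rightarrow> real \<Rightarrow> real \<Rightarrow> (real \<Rightarrow> real) \<Rightarrow>
   (int \<Rightarrow> real \<Rightarrow> real \<Rightarrow> real) \<Rightarrow> (int \<Rightarrow> real \<Rightarrow> real) \<Rightarrow> bool" where
  "subsolution \<alpha> \<beta> d f v rho \<longleftrightarrow>
    (\<exists>vt vx vxx drho. reg_derivs v rho vt vx vxx drho \<and>
      (\<forall>t>0. \<forall>j.
         (\<forall>x\<in>{0<..<1}. vt j t x \<le> d * vxx j t x) \<and>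
         drho j t \<le> f (rho j t) + \<alpha> * (v j t 0 + v (j - 1) t 1) - 2 * \<beta> * rho j t \<and>
         - d * vx j t 0 + \<alpha> * v j t 0 \<le> \<beta> * rho j t \<and>
         d * vx j t 1 + \<alpha> * v j t 1 \<le> \<beta> * rho (j + 1) t))"

definition locally_bounded_in_time ::
  "(int \<Rightarrow> real \<Rightarrow> real \<Rightarrow> real) \<Rightarrow> (int \<Rightarrow> real \<Rightarrow> real) \<Rightarrow> bool" where
  "locally_bounded_in_time v rho \<longleftrightarrow>
    (\<forall>T>0. \<exists>M. \<forall>t\<in>{0..T}. \<forall>j. \<forall>x\<in>{0..1}. \<bar>v j t x\<bar> + \<bar>rho j t\<bar> \<le> M)"

end

theory Submission
  imports Defs
begin

(* Write w_j = vu_j - vl_j and r_j = ru_j - rl_j. Subtracting the inequalities, every w_j is a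
   supersolution of w_t = d w_xx on (0,1) with Robin data beta r_j at x = 0 and beta r_(j+1) at
   x = 1, and r_j' >= alpha (w_j(t,0) + w_(j-1)(t,1)) - L |r_j| - 2 beta r_j, where L is a Lipschitz
   constant of f on the bounded range of the rho's.

   Nonnegativity: perturb w_j by eps e^(Kt) a_j and r_j by eps e^(Kt) (1 + j^2), where alpha a_j
   exceeds both beta (1 + j^2) and beta (1 + (j+1)^2). By local boundedness only finitely many of
   these perturbed components can reach zero on [0,T], so there is a first touching time, and there
   the heat inequality, a Robin condition or the equation for r_j is violated. Then let eps -> 0.

   Positivity: a Gaussian barrier shows that one positive value of w_j(t0) makes w_j(t0 + s)
   positive on all of [0,1] for small s > 0, and a parabolic barrier keeps it positive afterwards.
   A positive w_j makes r_j and r_(j+1) positive through their equations, and a positive r_j makes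
   w_j and w_(j-1) positive through their Robin data, so positivity spreads to every j. *)

section \<open>Minima and first touching times\<close>

lemma has_real_derivative_nonpos_at_left_min:
  fixes g :: "real \<Rightarrow> real"
  assumes g: "(g has_real_derivative D) (at t within {a..t})" and "a < t"
    and min: "\<forall>s\<in>{a..<t}. g t \<le> g s"
  shows "D \<le> 0"
proof -
  have "((\<lambda>s. (g s - g t) / (s - t)) \<longlongrightarrow> D) (at_left t)"
    using g \<open>a < t\<close> by (simp add: has_field_derivative_iff at_within_Icc_at_left)
  moreover have "\<forall>\<^sub>F s in at_left t. (g s - g t) / (s - t) \<le> 0"
    using eventually_at_left_real[OF \<open>a < t\<close>]
    by eventually_elim (use min in \<open>auto intro!: divide_nonneg_neg\<close>)
  ultimately show ?thesis
    by (rule tendsto_upperbound) simp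
qed

lemma has_real_derivative_nonneg_at_right_min:
  fixes g :: "real \<Rightarrow> real"
  assumes g: "(g has_real_derivative D) (at t within {t..b})" and "t < b"
    and min: "\<forall>s\<in>{t<..b}. g t \<le> g s"
  shows "0 \<le> D"
proof -
  have "((\<lambda>s. (g s - g t) / (s - t)) \<longlongrightarrow> D) (at_right t)"
    using g \<open>t < b\<close> by (simp add: has_field_derivative_iff at_within_Icc_at_right)
  moreover have "\<forall>\<^sub>F s in at_right t. 0 \<le> (g s - g t) / (s - t)"
    using eventually_at_right_real[OF \<open>t < b\<close>] by eventually_elim (use min in auto)
  ultimately show ?thesis
    by (rule tendsto_lowerbound) simp
qed

lemma second_derivative_nonneg_at_min:
  fixes h h' :: "real \<Rightarrow> real"
  assumes x: "a < x" "x < b" and min: "\<forall>y\<in>{a<..<b}. h x \<le> h y"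
    and h: "\<forall>y\<in>{a<..<b}. (h has_real_derivative h' y) (at y)"
    and h': "(h' has_real_derivative D) (at x)"
  shows "0 \<le> D"
proof (rule ccontr)
  assume "\<not> 0 \<le> D"
  have "h' x = 0"
  proof (rule DERIV_local_min[of h "h' x" x "min (x - a) (b - x)"])
    show "(h has_real_derivative h' x) (at x)"
      using h x by simp
    show "\<forall>y. \<bar>x - y\<bar> < min (x - a) (b - x) \<longrightarrow> h x \<le> h y"
    proof (intro allI impI)
      fix y assume "\<bar>x - y\<bar> < min (x - a) (b - x)"
      then have "y \<in> {a<..<b}"
        by (auto simp: abs_less_iff)
      then show "h x \<le> h y"
        using min by blast
    qed
  qed (use x in simp)
  then obtain e where "0 < e" and e: "\<forall>k>0. k < e \<longrightarrow> h' (x + k) < 0"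
    using DERIV_neg_dec_right[OF h'] \<open>\<not> 0 \<le> D\<close> by force
  obtain m where m: "0 < m" "m \<le> b - x" "m \<le> e"
    using x \<open>0 < e\<close> by (intro that[of "min e (b - x)"]) auto
  define y where "y = x + m / 2"
  have y: "x < y" "y < b" "y < x + e"
    using m by (auto simp: y_def)
  have "h y < h x"
  proof (rule DERIV_neg_imp_decreasing_open[OF \<open>x < y\<close>])
    fix z assume "x < z" "z < y"
    then show "\<exists>l. (h has_real_derivative l) (at z) \<and> l < 0"
      using h e[rule_format, of "z - x"] x y by (intro exI[of _ "h' z"]) auto
  next
    show "continuous_on {x..y} h"
      by (rule DERIV_continuous_on[of _ _ h'], rule has_field_derivative_at_within)
        (use h x y in auto)
  qed
  moreover have "h x \<le> h y"
    using min x y by auto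
  ultimately show False
    by simp
qed

lemma compact_nonpos_times:
  fixes Z :: "real \<Rightarrow> real \<Rightarrow> real"
  assumes "continuous_on ({t0..T} \<times> {0..1}) (\<lambda>(t, x). Z t x)"
  shows "compact {t\<in>{t0..T}. \<exists>x\<in>{0..1}. Z t x \<le> 0}"
proof -
  let ?R = "{t0..T} \<times> {0..1::real}"
  have "closed (?R \<inter> (\<lambda>(t, x). Z t x) -` {..0})"
    using assms by (intro continuous_closed_preimage) (auto intro: closed_Times)
  then have "compact (?R \<inter> (?R \<inter> (\<lambda>(t, x). Z t x) -` {..0}))"
    by (intro compact_Int_closed compact_Times compact_Icc)
  then have "compact (fst ` (?R \<inter> (\<lambda>(t, x). Z t x) -` {..0}))"
    by (intro compact_continuous_image continuous_on_fst continuous_on_id) simp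
  moreover have "fst ` (?R \<inter> (\<lambda>(t, x). Z t x) -` {..0}) = {t\<in>{t0..T}. \<exists>x\<in>{0..1}. Z t x \<le> 0}"
    by force
  ultimately show ?thesis
    by simp
qed

lemma first_touching_time:
  fixes Z :: "'i \<Rightarrow> real \<Rightarrow> real \<Rightarrow> real"
  assumes "finite J" and "t0 \<le> T"
    and cont: "\<forall>i\<in>J. continuous_on ({t0..T} \<times> {0..1}) (\<lambda>(t, x). Z i t x)"
    and init: "\<forall>i. \<forall>x\<in>{0..1}. 0 < Z i t0 x"
    and outside: "\<forall>i. i \<notin> J \<longrightarrow> (\<forall>t\<in>{t0..T}. \<forall>x\<in>{0..1}. 0 < Z i t x)"
    and touch: "\<exists>i. \<exists>t\<in>{t0..T}. \<exists>x\<in>{0..1}. Z i t x \<le> 0"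
  obtains t i x where "t0 < t" "t \<le> T" "x \<in> {0..1}" "Z i t x = 0"
    and "\<forall>i. \<forall>y\<in>{0..1}. 0 \<le> Z i t y" and "\<forall>i. \<forall>s\<in>{t0..<t}. \<forall>y\<in>{0..1}. 0 < Z i s y"
proof -
  define B where "B = (\<Union>i\<in>J. {t\<in>{t0..T}. \<exists>x\<in>{0..1}. Z i t x \<le> 0})"
  have "compact B"
    unfolding B_def using \<open>finite J\<close> cont by (intro compact_UN compact_nonpos_times) auto
  moreover have "B \<noteq> {}"
    using touch outside unfolding B_def by force
  ultimately obtain t where "t \<in> B" and least: "\<forall>s\<in>B. t \<le> s"
    using compact_attains_inf by blast
  then obtain i x where i: "i \<in> J" "x \<in> {0..1}" "Z i t x \<le> 0" and t: "t0 \<le> t" "t \<le> T"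
    unfolding B_def by auto
  have "t0 < t"
    using init i t by (metis le_less not_le)
  have before: "\<forall>i. \<forall>s\<in>{t0..<t}. \<forall>y\<in>{0..1}. 0 < Z i s y"
  proof (intro allI ballI)
    fix i s y assume s: "s \<in> {t0..<t}" and y: "y \<in> {0..1::real}"
    show "0 < Z i s y"
    proof (cases "i \<in> J")
      case True
      have "s \<notin> B"
        using least s by force
      then show ?thesis
        using True s y t unfolding B_def by force
    qed (use outside s y t in auto)
  qed
  have after: "\<forall>i. \<forall>y\<in>{0..1}. 0 \<le> Z i t y"
  proof (intro allI ballI)
    fix i y assume y: "y \<in> {0..1::real}"
    show "0 \<le> Z i t y"
    proof (cases "i \<in> J")
      case True
      have "continuous_on {t0..t} (\<lambda>s. (s, y))"
        by (intro continuous_intros)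
      then have "continuous_on {t0..t} (\<lambda>s. (\<lambda>(t, x). Z i t x) (s, y))"
        by (rule continuous_on_compose2[OF cont[rule_format, OF True]]) (use y t in auto)
      moreover have "0 \<le> Z i s y" if "s \<in> {t0..<t}" for s
        using before that y by (simp add: less_imp_le)
      ultimately show ?thesis
        using continuous_ge_on_closure[of "{t0..<t}" "\<lambda>s. Z i s y" t 0] \<open>t0 < t\<close> by simp
    qed (use outside y t in \<open>auto intro: less_imp_le\<close>)
  qed
  have "Z i t x = 0"
    using after i by (meson antisym)
  show thesis
    using \<open>t0 < t\<close> t(2) i(2) \<open>Z i t x = 0\<close> after before by (rule that)
qed

section \<open>Heat inequalities with Robin boundary conditions\<close>

definition heat_robin_super ::
  "real \<Rightarrow> real \<Rightarrow> (real \<Rightarrow> real) \<Rightarrow> (real \<Rightarrow> real) \<Rightarrow> (real \<Rightarrow> real \<Rightarrow> real) \<Rightarrow>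
   (real \<Rightarrow> real \<Rightarrow> real) \<Rightarrow> (real \<Rightarrow> real \<Rightarrow> real) \<Rightarrow> (real \<Rightarrow> real \<Rightarrow> real) \<Rightarrow>
   real \<Rightarrow> real \<Rightarrow> bool" where
  "heat_robin_super d \<alpha> g0 g1 w wt wx wxx t0 T \<longleftrightarrow>
    continuous_on ({t0..T} \<times> {0..1}) (\<lambda>(t, x). w t x) \<and>
    (\<forall>t\<in>{t0<..T}. \<forall>x\<in>{0<..<1}. ((\<lambda>s. w s x) has_real_derivative wt t x) (at t) \<and>
        (wx t has_real_derivative wxx t x) (at x) \<and> d * wxx t x \<le> wt t x) \<and>
    (\<forall>t\<in>{t0<..T}. (\<forall>x\<in>{0..1}. (w t has_real_derivative wx t x) (at x within {0..1})) \<and>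
        g0 t \<le> - d * wx t 0 + \<alpha> * w t 0 \<and> g1 t \<le> d * wx t 1 + \<alpha> * w t 1)"

definition heat_robin_sub ::
  "real \<Rightarrow> real \<Rightarrow> (real \<Rightarrow> real) \<Rightarrow> (real \<Rightarrow> real) \<Rightarrow> (real \<Rightarrow> real \<Rightarrow> real) \<Rightarrow>
   (real \<Rightarrow> real \<Rightarrow> real) \<Rightarrow> (real \<Rightarrow> real \<Rightarrow> real) \<Rightarrow> (real \<Rightarrow> real \<Rightarrow> real) \<Rightarrow>
   real \<Rightarrow> real \<Rightarrow> bool" where
  "heat_robin_sub d \<alpha> g0 g1 w wt wx wxx t0 T \<longleftrightarrow>
    continuous_on ({t0..T} \<times> {0..1}) (\<lambda>(t, x). w t x) \<and>
    (\<forall>t\<in>{t0<..T}. \<forall>x\<in>{0<..<1}. ((\<lambda>s. w s x) has_real_derivative wt t x) (at t) \<and>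
        (wx t has_real_derivative wxx t x) (at x) \<and> wt t x \<le> d * wxx t x) \<and>
    (\<forall>t\<in>{t0<..T}. (\<forall>x\<in>{0..1}. (w t has_real_derivative wx t x) (at x within {0..1})) \<and>
        - d * wx t 0 + \<alpha> * w t 0 \<le> g0 t \<and> d * wx t 1 + \<alpha> * w t 1 \<le> g1 t)"

lemma heat_robin_super_subinterval:
  assumes "heat_robin_super d \<alpha> g0 g1 w wt wx wxx t0 T" and "t0 \<le> t1" and "T1 \<le> T"
  shows "heat_robin_super d \<alpha> g0 g1 w wt wx wxx t1 T1"
  using assms unfolding heat_robin_super_def
  by (auto intro: continuous_on_subset[of "{t0..T} \<times> {0..1}"])

lemma heat_robin_super_continuous_slice:
  assumes "heat_robin_super d \<alpha> g0 g1 w wt wx wxx t0 T" and "t \<in> {t0..T}"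
  shows "continuous_on {0..1} (w t)"
proof -
  have "continuous_on ({t0..T} \<times> {0..1}) (\<lambda>(t, x). w t x)"
    using assms(1) unfolding heat_robin_super_def by blast
  then have "continuous_on {0..1} (\<lambda>x. (\<lambda>(t, x). w t x) (t, x))"
    by (rule continuous_on_compose2) (use assms(2) in \<open>auto intro: continuous_on_Pair\<close>)
  then show ?thesis
    by simp
qed

lemma heat_robin_super_diff:
  assumes "heat_robin_super d \<alpha> g0 g1 w wt wx wxx t0 T" and "heat_robin_sub d \<alpha> h0 h1 P Pt Px Pxx t0 T"
  shows "heat_robin_super d \<alpha> (\<lambda>t. g0 t - h0 t) (\<lambda>t. g1 t - h1 t) (\<lambda>t x. w t x - P t x)
    (\<lambda>t x. wt t x - Pt t x) (\<lambda>t x. wx t x - Px t x) (\<lambda>t x. wxx t x - Pxx t x) t0 T"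
proof -
  note W = assms(1)[unfolded heat_robin_super_def] and P = assms(2)[unfolded heat_robin_sub_def]
  have "continuous_on ({t0..T} \<times> {0..1}) (\<lambda>p. (\<lambda>(t, x). w t x) p - (\<lambda>(t, x). P t x) p)"
    using W P by (intro continuous_on_diff) auto
  then show ?thesis
    unfolding heat_robin_super_def
  proof (intro conjI ballI)
    fix t x assume tx: "t \<in> {t0<..T}" "x \<in> {0<..<1::real}"
    then show "((\<lambda>s. w s x - P s x) has_real_derivative wt t x - Pt t x) (at t)"
      and "((\<lambda>x. wx t x - Px t x) has_real_derivative wxx t x - Pxx t x) (at x)"
      using W P by (auto intro!: DERIV_diff)
    have "d * wxx t x \<le> wt t x" "Pt t x \<le> d * Pxx t x"
      using W P tx by auto
    then show "d * (wxx t x - Pxx t x) \<le> wt t x - Pt t x"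
      unfolding right_diff_distrib by linarith
  next
    fix t x assume "t \<in> {t0<..T}" "x \<in> {0..1::real}"
    then show "((\<lambda>x. w t x - P t x) has_real_derivative wx t x - Px t x) (at x within {0..1})"
      using W P by (auto intro!: DERIV_diff)
  next
    fix t assume t: "t \<in> {t0<..T}"
    have "g0 t \<le> - d * wx t 0 + \<alpha> * w t 0" "- d * Px t 0 + \<alpha> * P t 0 \<le> h0 t"
      "g1 t \<le> d * wx t 1 + \<alpha> * w t 1" "d * Px t 1 + \<alpha> * P t 1 \<le> h1 t"
      using W P t by auto
    then show "g0 t - h0 t \<le> - d * (wx t 0 - Px t 0) + \<alpha> * (w t 0 - P t 0)"
      and "g1 t - h1 t \<le> d * (wx t 1 - Px t 1) + \<alpha> * (w t 1 - P t 1)"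
      unfolding right_diff_distrib by linarith+
  qed (simp add: case_prod_unfold)
qed

lemma heat_robin_super_no_touch:
  assumes w: "heat_robin_super d \<alpha> g0 g1 w wt wx wxx t0 T" and "0 < d"
    and t: "t0 < t" "t \<le> T" and x: "x \<in> {0..1}"
    and c: "(c has_real_derivative c') (at t)" "0 < c'"
    and g: "- \<alpha> * c t < g0 t" "- \<alpha> * c t < g1 t"
    and zero: "w t x + c t = 0"
    and above: "\<forall>y\<in>{0..1}. 0 \<le> w t y + c t"
    and before: "\<forall>s\<in>{t0..<t}. 0 \<le> w s x + c s"
  shows False
proof -
  have t': "t \<in> {t0<..T}"
    using t by simp
  note W = w[unfolded heat_robin_super_def]
  have wx: "(w t has_real_derivative wx t y) (at y within {0..1})" if "y \<in> {0..1}" for y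
    using W t' that by blast
  have min: "w t x \<le> w t y" if "y \<in> {0..1}" for y
    using above[rule_format, OF that] zero by linarith
  have "w t x = - c t"
    using zero by simp
  then have boundary: "\<alpha> * w t x = - \<alpha> * c t"
    by simp
  consider "x \<in> {0<..<1}" | "x = 0" | "x = 1"
    using x by fastforce
  then show False
  proof cases
    case 1
    have "((\<lambda>s. w s x + c s) has_real_derivative wt t x + c') (at t)"
      using W t' 1 c(1) by (intro DERIV_add) auto
    then have "wt t x + c' \<le> 0"
      using has_real_derivative_nonpos_at_left_min[of "\<lambda>s. w s x + c s" "wt t x + c'" t t0]
        has_field_derivative_at_within t before zero by auto
    moreover have "0 \<le> wxx t x"
    proof (rule second_derivative_nonneg_at_min[of 0 x 1 "w t" "wx t"])
      show "\<forall>y\<in>{0<..<1}. (w t has_real_derivative wx t y) (at y)"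
      proof
        fix y :: real assume "y \<in> {0<..<1}"
        then show "(w t has_real_derivative wx t y) (at y)"
          using wx[of y] at_within_Icc_at[of 0 y 1] by simp
      qed
      show "(wx t has_real_derivative wxx t x) (at x)"
        using W t' 1 by blast
    qed (use 1 min in auto)
    moreover have "d * wxx t x \<le> wt t x"
      using W t' 1 by blast
    ultimately show False
      using \<open>0 < d\<close> \<open>0 < c'\<close> by (smt (verit) mult_nonneg_nonneg)
  next
    case 2
    have "0 \<le> wx t 0"
      using has_real_derivative_nonneg_at_right_min[of "w t" "wx t 0" 0 1] wx[of 0] min 2 by auto
    then have "- d * wx t 0 \<le> 0"
      using \<open>0 < d\<close> by simp
    moreover have "g0 t \<le> - d * wx t 0 + \<alpha> * w t 0"
      using W t' by blast
    ultimately show False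
      using g(1) boundary[unfolded 2] by linarith
  next
    case 3
    have "wx t 1 \<le> 0"
      using has_real_derivative_nonpos_at_left_min[of "w t" "wx t 1" 1 0] wx[of 1] min 3 by auto
    then have "d * wx t 1 \<le> 0"
      using \<open>0 < d\<close> by (simp add: mult_nonneg_nonpos)
    moreover have "g1 t \<le> d * wx t 1 + \<alpha> * w t 1"
      using W t' by blast
    ultimately show False
      using g(2) boundary[unfolded 3] by linarith
  qed
qed

lemma heat_robin_super_nonneg:
  assumes w: "heat_robin_super d \<alpha> g0 g1 w wt wx wxx t0 T" and "0 < d" "0 < \<alpha>"
    and g: "\<forall>t\<in>{t0<..T}. 0 \<le> g0 t \<and> 0 \<le> g1 t"
    and init: "\<forall>x\<in>{0..1}. 0 \<le> w t0 x"
  shows "\<forall>t\<in>{t0..T}. \<forall>x\<in>{0..1}. 0 \<le> w t x"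
proof (intro ballI)
  fix t x assume tx: "t \<in> {t0..T}" "x \<in> {0..1::real}"
  have perturbed: "0 < w t x + \<eta> * exp t" if "0 < \<eta>" for \<eta>
  proof (rule ccontr)
    assume "\<not> 0 < w t x + \<eta> * exp t"
    define Z where "Z = (\<lambda>(_::unit) t x. w t x + \<eta> * exp t)"
    have "continuous_on ({t0..T} \<times> {0..1}) (\<lambda>p. w (fst p) (snd p))"
      using w unfolding heat_robin_super_def by (simp add: case_prod_beta')
    then have "continuous_on ({t0..T} \<times> {0..1}) (\<lambda>p. w (fst p) (snd p) + \<eta> * exp (fst p))"
      by (intro continuous_intros)
    then have cont: "\<forall>i\<in>UNIV. continuous_on ({t0..T} \<times> {0..1}) (\<lambda>(t, x). Z i t x)"
      by (simp add: Z_def case_prod_beta')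
    have "Z () t x \<le> 0"
      using \<open>\<not> 0 < w t x + \<eta> * exp t\<close> by (simp add: Z_def)
    then have touch: "\<exists>i. \<exists>t\<in>{t0..T}. \<exists>x\<in>{0..1}. Z i t x \<le> 0"
      using tx by blast
    obtain s i y where s: "t0 < s" "s \<le> T" "y \<in> {0..1}" "Z i s y = 0"
      and after: "\<forall>i. \<forall>y\<in>{0..1}. 0 \<le> Z i s y"
      and before: "\<forall>i. \<forall>r\<in>{t0..<s}. \<forall>y\<in>{0..1}. 0 < Z i r y"
      by (rule first_touching_time[OF _ _ cont _ _ touch])
        (use tx init \<open>0 < \<eta>\<close> in \<open>auto simp: Z_def add_nonneg_pos\<close>)
    show False
    proof (rule heat_robin_super_no_touch[OF w \<open>0 < d\<close> s(1,2,3)])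
      show "((\<lambda>t. \<eta> * exp t) has_real_derivative \<eta> * exp s) (at s)"
        by (auto intro!: derivative_eq_intros)
      show "- \<alpha> * (\<eta> * exp s) < g0 s" "- \<alpha> * (\<eta> * exp s) < g1 s"
        using g s \<open>0 < \<alpha>\<close> \<open>0 < \<eta>\<close> by (auto intro: less_le_trans[of _ 0])
    qed (use s after before \<open>0 < \<eta>\<close> in \<open>auto simp: Z_def less_imp_le\<close>)
  qed
  show "0 \<le> w t x"
  proof (rule field_le_epsilon)
    fix e :: real assume "0 < e"
    then have "0 < w t x + e / exp t * exp t"
      by (intro perturbed) simp
    then show "0 \<le> w t x + e"
      by simp
  qed
qed

lemma heat_robin_comparison:
  assumes "heat_robin_super d \<alpha> g0 g1 w wt wx wxx t0 T" and "heat_robin_sub d \<alpha> h0 h1 P Pt Px Pxx t0 T"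
    and "0 < d" "0 < \<alpha>"
    and "\<forall>t\<in>{t0<..T}. h0 t \<le> g0 t \<and> h1 t \<le> g1 t"
    and "\<forall>x\<in>{0..1}. P t0 x \<le> w t0 x"
  shows "\<forall>t\<in>{t0..T}. \<forall>x\<in>{0..1}. P t x \<le> w t x"
proof -
  have "\<forall>t\<in>{t0..T}. \<forall>x\<in>{0..1}. 0 \<le> w t x - P t x"
    by (rule heat_robin_super_nonneg[OF heat_robin_super_diff[OF assms(1,2)] assms(3,4)])
      (use assms(5,6) in auto)
  then show ?thesis
    by auto
qed

lemma heat_robin_super_vanishing_slice:
  assumes w: "heat_robin_super d \<alpha> g0 g1 w wt wx wxx t0 T" and t: "t \<in> {t0<..T}"
    and zero: "\<forall>x\<in>{0..1}. w t x = 0"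
  shows "g0 t \<le> 0 \<and> g1 t \<le> 0"
proof -
  note W = w[unfolded heat_robin_super_def]
  have wx: "(w t has_real_derivative wx t y) (at y within {0..1})" if "y \<in> {0..1}" for y
    using W t that by blast
  have wx': "((\<lambda>x. - w t x) has_real_derivative - wx t y) (at y within {0..1})" if "y \<in> {0..1}" for y
    using wx[OF that] by (rule DERIV_minus)
  have "0 \<le> wx t 0"
    using has_real_derivative_nonneg_at_right_min[of "w t" "wx t 0" 0 1] wx[of 0] zero by auto
  moreover have "0 \<le> - wx t 0"
    using has_real_derivative_nonneg_at_right_min[of "\<lambda>x. - w t x" "- wx t 0" 0 1] wx'[of 0] zero by auto
  moreover have "wx t 1 \<le> 0"
    using has_real_derivative_nonpos_at_left_min[of "w t" "wx t 1" 1 0] wx[of 1] zero by auto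
  moreover have "- wx t 1 \<le> 0"
    using has_real_derivative_nonpos_at_left_min[of "\<lambda>x. - w t x" "- wx t 1" 1 0] wx'[of 1] zero by auto
  moreover have "g0 t \<le> - d * wx t 0 + \<alpha> * w t 0" "g1 t \<le> d * wx t 1 + \<alpha> * w t 1"
    using W t by blast+
  ultimately show ?thesis
    using zero by simp
qed

section \<open>Barriers and strong positivity\<close>

(* The coefficient makes e^(-2 alpha t) times this parabola satisfy both Robin conditions with
   equality. *)
definition robin_parabola :: "real \<Rightarrow> real \<Rightarrow> real \<Rightarrow> real" where
  "robin_parabola d \<alpha> x = 1 - 4 * \<alpha> / (4 * d + \<alpha>) * (x - 1 / 2)^2"

lemma robin_parabola_bounds:
  assumes "0 < d" "0 < \<alpha>" "x \<in> {0..1}"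
  shows "4 * d / (4 * d + \<alpha>) \<le> robin_parabola d \<alpha> x" "robin_parabola d \<alpha> x \<le> 1"
proof -
  have "x * x \<le> x"
    using assms(3) by (simp add: mult_left_le)
  then have "(x - 1 / 2)^2 \<le> 1 / 4"
    by (simp add: power2_eq_square algebra_simps)
  then have "4 * \<alpha> / (4 * d + \<alpha>) * (x - 1 / 2)^2 \<le> 4 * \<alpha> / (4 * d + \<alpha>) * (1 / 4)"
    using assms by (intro mult_left_mono) auto
  moreover have "1 - 4 * \<alpha> / (4 * d + \<alpha>) * (1 / 4) = 4 * d / (4 * d + \<alpha>)"
    using assms by (simp add: field_simps)
  ultimately show "4 * d / (4 * d + \<alpha>) \<le> robin_parabola d \<alpha> x"
    unfolding robin_parabola_def by linarith
  show "robin_parabola d \<alpha> x \<le> 1"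
    using assms by (simp add: robin_parabola_def)
qed

lemma robin_parabola_barrier:
  assumes "0 < d" "0 < \<alpha>" "0 \<le> m"
  shows "\<exists>Pt Px Pxx. heat_robin_sub d \<alpha> (\<lambda>_. 0) (\<lambda>_. 0)
    (\<lambda>t x. m * exp (- 2 * \<alpha> * (t - t1)) * robin_parabola d \<alpha> x) Pt Px Pxx t1 T"
proof -
  define A where "A = 4 * \<alpha> / (4 * d + \<alpha>)"
  define E where "E t = m * exp (- 2 * \<alpha> * (t - t1))" for t
  define \<phi> where "\<phi> x = 1 - A * (x - 1 / 2)^2" for x
  have A: "\<alpha> * (1 - A / 4) = A * d"
    using assms by (simp add: A_def field_simps)
  have P: "m * exp (- 2 * \<alpha> * (t - t1)) * robin_parabola d \<alpha> x = E t * \<phi> x" for t x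
    by (simp add: E_def A_def \<phi>_def robin_parabola_def)
  have heat: "- 2 * \<alpha> * (E t * \<phi> x) \<le> d * (E t * (- 2 * A))" if "x \<in> {0..1}" for t x
  proof -
    have "\<alpha> * (4 * d / (4 * d + \<alpha>)) \<le> \<alpha> * robin_parabola d \<alpha> x"
      using robin_parabola_bounds(1)[OF assms(1,2) that] assms by (intro mult_left_mono) auto
    moreover have "\<alpha> * (4 * d / (4 * d + \<alpha>)) = A * d"
      using assms by (simp add: A_def field_simps)
    moreover have "robin_parabola d \<alpha> x = \<phi> x"
      by (simp add: A_def \<phi>_def robin_parabola_def)
    ultimately have "A * d \<le> \<alpha> * \<phi> x"
      by simp
    then have "E t * (A * d) \<le> E t * (\<alpha> * \<phi> x)"
      using assms by (intro mult_left_mono) (auto simp: E_def)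
    moreover have "- 2 * \<alpha> * (E t * \<phi> x) = - 2 * (E t * (\<alpha> * \<phi> x))"
      and "d * (E t * (- 2 * A)) = - 2 * (E t * (A * d))"
      by (simp_all add: algebra_simps)
    ultimately show ?thesis
      by linarith
  qed
  have "- d * (E t * (- 2 * A * (0 - 1 / 2))) + \<alpha> * (E t * \<phi> 0) = E t * (\<alpha> * (1 - A / 4) - A * d)"
    "d * (E t * (- 2 * A * (1 - 1 / 2))) + \<alpha> * (E t * \<phi> 1) = E t * (\<alpha> * (1 - A / 4) - A * d)"
    for t by (simp_all add: \<phi>_def power2_eq_square algebra_simps)
  then have boundary: "- d * (E t * (- 2 * A * (0 - 1 / 2))) + \<alpha> * (E t * \<phi> 0) = 0"
    "d * (E t * (- 2 * A * (1 - 1 / 2))) + \<alpha> * (E t * \<phi> 1) = 0" for t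
    by (simp_all add: A)
  show ?thesis
    unfolding heat_robin_sub_def P
  proof (rule exI[where x = "\<lambda>t x. - 2 * \<alpha> * (E t * \<phi> x)"],
      rule exI[where x = "\<lambda>t x. E t * (- 2 * A * (x - 1 / 2))"],
      rule exI[where x = "\<lambda>t x. E t * (- 2 * A)"], intro conjI ballI)
    show "continuous_on ({t1..T} \<times> {0..1}) (\<lambda>(t, x). E t * \<phi> x)"
      unfolding E_def \<phi>_def case_prod_beta' by (intro continuous_intros)
  next
    fix t x
    show "((\<lambda>s. E s * \<phi> x) has_real_derivative - 2 * \<alpha> * (E t * \<phi> x)) (at t)"
      unfolding E_def by (auto intro!: derivative_eq_intros)
    show "((\<lambda>x. E t * (- 2 * A * (x - 1 / 2))) has_real_derivative E t * (- 2 * A)) (at x)"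
      by (auto intro!: derivative_eq_intros)
    show "((\<lambda>x. E t * \<phi> x) has_real_derivative E t * (- 2 * A * (x - 1 / 2))) (at x within {0..1})"
      unfolding \<phi>_def by (auto intro!: derivative_eq_intros simp: power2_eq_square algebra_simps)
  next
    fix t x assume "x \<in> {0<..<1::real}"
    then show "- 2 * \<alpha> * (E t * \<phi> x) \<le> d * (E t * (- 2 * A))"
      by (intro heat) simp
  next
    fix t
    show "- d * (E t * (- 2 * A * (0 - 1 / 2))) + \<alpha> * (E t * \<phi> 0) \<le> 0"
      "d * (E t * (- 2 * A * (1 - 1 / 2))) + \<alpha> * (E t * \<phi> 1) \<le> 0"
      using boundary[of t] by linarith+
  qed
qed

lemma heat_robin_super_pos_forward:
  assumes w: "heat_robin_super d \<alpha> g0 g1 w wt wx wxx t1 T" and "0 < d" "0 < \<alpha>" "t1 \<le> T"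
    and g: "\<forall>t\<in>{t1<..T}. 0 \<le> g0 t \<and> 0 \<le> g1 t"
    and pos: "\<forall>x\<in>{0..1}. 0 < w t1 x"
  shows "\<forall>t\<in>{t1..T}. \<forall>x\<in>{0..1}. 0 < w t x"
proof -
  have "continuous_on {0..1} (w t1)"
    using heat_robin_super_continuous_slice[OF w] \<open>t1 \<le> T\<close> by simp
  then obtain x0 where x0: "x0 \<in> {0..1}" and min: "\<forall>x\<in>{0..1}. w t1 x0 \<le> w t1 x"
    using continuous_attains_inf[of "{0..1}" "w t1"] by auto
  define m where "m = w t1 x0"
  have "0 < m"
    using pos x0 by (simp add: m_def)
  obtain Pt Px Pxx where P: "heat_robin_sub d \<alpha> (\<lambda>_. 0) (\<lambda>_. 0)
      (\<lambda>t x. m * exp (- 2 * \<alpha> * (t - t1)) * robin_parabola d \<alpha> x) Pt Px Pxx t1 T"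
    using robin_parabola_barrier[OF \<open>0 < d\<close> \<open>0 < \<alpha>\<close>, of m t1 T] \<open>0 < m\<close> by auto
  have init: "m * exp (- 2 * \<alpha> * (t1 - t1)) * robin_parabola d \<alpha> x \<le> w t1 x"
    if "x \<in> {0..1}" for x
  proof -
    have "m * exp (- 2 * \<alpha> * (t1 - t1)) * robin_parabola d \<alpha> x = m * robin_parabola d \<alpha> x"
      by simp
    also have "\<dots> \<le> m"
      using robin_parabola_bounds(2)[OF \<open>0 < d\<close> \<open>0 < \<alpha>\<close> that] \<open>0 < m\<close> by (simp add: mult_left_le)
    also have "\<dots> \<le> w t1 x"
      using min that by (simp add: m_def)
    finally show ?thesis .
  qed
  have below: "\<forall>t\<in>{t1..T}. \<forall>x\<in>{0..1}. m * exp (- 2 * \<alpha> * (t - t1)) * robin_parabola d \<alpha> x \<le> w t x"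
    by (rule heat_robin_comparison[OF w P \<open>0 < d\<close> \<open>0 < \<alpha>\<close>]) (use g init in auto)
  show ?thesis
  proof (intro ballI)
    fix t x assume "t \<in> {t1..T}" "x \<in> {0..1::real}"
    have "0 < 4 * d / (4 * d + \<alpha>)"
      using \<open>0 < d\<close> \<open>0 < \<alpha>\<close> by simp
    then have "0 < m * exp (- 2 * \<alpha> * (t - t1)) * robin_parabola d \<alpha> x"
      using robin_parabola_bounds(1)[OF \<open>0 < d\<close> \<open>0 < \<alpha>\<close> \<open>x \<in> _\<close>] \<open>0 < m\<close> by simp
    moreover have "m * exp (- 2 * \<alpha> * (t - t1)) * robin_parabola d \<alpha> x \<le> w t x"
      using below \<open>t \<in> _\<close> \<open>x \<in> _\<close> by blast
    ultimately show "0 < w t x"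
      by linarith
  qed
qed

(* The heat kernel of d w_xx without its factor s^(-1/2); the damping e^(-kappa s) with
   kappa >= 1/(2 s) compensates for it, so that it stays a subsolution. *)
definition damped_gaussian :: "real \<Rightarrow> real \<Rightarrow> real \<Rightarrow> real \<Rightarrow> real \<Rightarrow> real" where
  "damped_gaussian d \<kappa> x0 s x = exp (- ((x - x0)^2 / (4 * d * s)) - \<kappa> * s)"

lemma damped_gaussian_has_derivative_time:
  assumes "0 < d" "0 < s"
  shows "((\<lambda>s. damped_gaussian d \<kappa> x0 s x) has_real_derivative
    damped_gaussian d \<kappa> x0 s x * ((x - x0)^2 / (4 * d * s^2) - \<kappa>)) (at s)"
proof -
  have "((\<lambda>s. - ((x - x0)^2 / (4 * d * s)) - \<kappa> * s) has_real_derivative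
      (x - x0)^2 / (4 * d * s^2) - \<kappa>) (at s)"
    using assms by (auto intro!: derivative_eq_intros simp: field_simps power2_eq_square)
  then show ?thesis
    unfolding damped_gaussian_def by (rule DERIV_fun_exp)
qed

lemma damped_gaussian_has_derivative_space:
  assumes "0 < d" "0 < s"
  shows "(damped_gaussian d \<kappa> x0 s has_real_derivative
    damped_gaussian d \<kappa> x0 s x * (- (x - x0) / (2 * d * s))) (at x)"
proof -
  have "((\<lambda>x. - ((x - x0)^2 / (4 * d * s)) - \<kappa> * s) has_real_derivative - (x - x0) / (2 * d * s)) (at x)"
    using assms by (auto intro!: derivative_eq_intros simp: field_simps power2_eq_square)
  then show ?thesis
    unfolding damped_gaussian_def[abs_def] by (rule DERIV_fun_exp)
qed

lemma damped_gaussian_has_second_derivative_space: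
  assumes "0 < d" "0 < s"
  shows "((\<lambda>x. damped_gaussian d \<kappa> x0 s x * (- (x - x0) / (2 * d * s))) has_real_derivative
    damped_gaussian d \<kappa> x0 s x * ((x - x0)^2 / (4 * d^2 * s^2) - 1 / (2 * d * s))) (at x)"
proof -
  have "((\<lambda>x. damped_gaussian d \<kappa> x0 s x * (- (x - x0) / (2 * d * s))) has_real_derivative
      damped_gaussian d \<kappa> x0 s x * (- (x - x0) / (2 * d * s)) * (- (x - x0) / (2 * d * s)) +
      - 1 / (2 * d * s) * damped_gaussian d \<kappa> x0 s x) (at x)"
    using assms by (intro DERIV_mult damped_gaussian_has_derivative_space)
      (auto intro!: derivative_eq_intros simp: field_simps)
  then show ?thesis
    by (rule DERIV_cong) (use assms in \<open>simp add: field_simps power2_eq_square\<close>)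
qed

lemma damped_gaussian_le_one:
  assumes "0 < d" "0 < s" "0 \<le> \<kappa>"
  shows "damped_gaussian d \<kappa> x0 s x \<le> 1"
proof -
  have "0 \<le> (x - x0)^2 / (4 * d * s)" "0 \<le> \<kappa> * s"
    using assms by simp_all
  then show ?thesis
    unfolding damped_gaussian_def exp_le_one_iff by linarith
qed

lemma damped_gaussian_less:
  assumes "0 < d" "0 < s" "\<bar>y - x0\<bar> < \<bar>x - x0\<bar>"
  shows "damped_gaussian d \<kappa> x0 s x < damped_gaussian d \<kappa> x0 s y"
proof -
  have "(y - x0)^2 < (x - x0)^2"
    using assms(3) by (metis abs_le_square_iff not_le)
  then show ?thesis
    using assms by (simp add: damped_gaussian_def divide_strict_right_mono)
qed

lemma damped_gaussian_subsolution_ineq: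
  assumes "0 < d" "0 < s" "1 / (2 * s) \<le> \<kappa>" "0 \<le> \<delta>"
  shows "\<delta> * (damped_gaussian d \<kappa> x0 s x * ((x - x0)^2 / (4 * d * s^2) - \<kappa>))
    \<le> d * (\<delta> * (damped_gaussian d \<kappa> x0 s x * ((x - x0)^2 / (4 * d^2 * s^2) - 1 / (2 * d * s))))"
proof -
  let ?G = "damped_gaussian d \<kappa> x0 s x" and ?q = "(x - x0)^2 / (4 * d * s^2)"
  have "\<delta> * ?G * (?q - \<kappa>) \<le> \<delta> * ?G * (?q - 1 / (2 * s))"
    using assms(3,4) by (intro mult_left_mono) (auto simp: damped_gaussian_def)
  moreover have "d * (\<delta> * (?G * ((x - x0)^2 / (4 * d^2 * s^2) - 1 / (2 * d * s)))) = \<delta> * ?G * (?q - 1 / (2 * s))"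
    using assms(1,2) by (simp add: field_simps power2_eq_square)
  ultimately show ?thesis
    using mult.assoc[of \<delta> ?G "?q - \<kappa>"] by linarith
qed

lemma damped_gaussian_robin_ineq:
  assumes "0 < d" "0 < s" "0 \<le> \<delta>" "0 \<le> \<alpha>" "0 \<le> m"
    and "\<alpha> \<le> x0 / (2 * s)" "\<alpha> \<le> (1 - x0) / (2 * s)"
  shows "- d * (\<delta> * (damped_gaussian d \<kappa> x0 s 0 * (- (0 - x0) / (2 * d * s))))
      + \<alpha> * (\<delta> * (damped_gaussian d \<kappa> x0 s 0 - m)) \<le> 0"
    and "d * (\<delta> * (damped_gaussian d \<kappa> x0 s 1 * (- (1 - x0) / (2 * d * s))))
      + \<alpha> * (\<delta> * (damped_gaussian d \<kappa> x0 s 1 - m)) \<le> 0"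
proof -
  let ?G = "damped_gaussian d \<kappa> x0 s"
  have "\<delta> * ?G 0 * (\<alpha> - x0 / (2 * s)) \<le> 0" "\<delta> * ?G 1 * (\<alpha> - (1 - x0) / (2 * s)) \<le> 0"
    using assms(3,6,7) by (auto intro!: mult_nonneg_nonpos simp: damped_gaussian_def)
  moreover have "0 \<le> \<alpha> * \<delta> * m"
    using assms(3-5) by simp
  moreover have "- d * (\<delta> * (?G 0 * (- (0 - x0) / (2 * d * s)))) + \<alpha> * (\<delta> * (?G 0 - m))
      = \<delta> * ?G 0 * (\<alpha> - x0 / (2 * s)) - \<alpha> * \<delta> * m"
    "d * (\<delta> * (?G 1 * (- (1 - x0) / (2 * d * s)))) + \<alpha> * (\<delta> * (?G 1 - m))
      = \<delta> * ?G 1 * (\<alpha> - (1 - x0) / (2 * s)) - \<alpha> * \<delta> * m"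
    using assms(1,2) by (simp_all add: field_simps)
  ultimately show "- d * (\<delta> * (?G 0 * (- (0 - x0) / (2 * d * s)))) + \<alpha> * (\<delta> * (?G 0 - m)) \<le> 0"
    and "d * (\<delta> * (?G 1 * (- (1 - x0) / (2 * d * s)))) + \<alpha> * (\<delta> * (?G 1 - m)) \<le> 0"
    by linarith+
qed

lemma damped_gaussian_barrier:
  assumes "0 < d" "0 < \<alpha>" "0 < \<tau>" "1 / (2 * \<tau>) \<le> \<kappa>" "0 \<le> \<delta>" "0 \<le> m"
    and "T - t0 + \<tau> \<le> x0 / (2 * \<alpha>)" "T - t0 + \<tau> \<le> (1 - x0) / (2 * \<alpha>)"
  shows "\<exists>Pt Px Pxx. heat_robin_sub d \<alpha> (\<lambda>_. 0) (\<lambda>_. 0)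
    (\<lambda>t x. \<delta> * (damped_gaussian d \<kappa> x0 (t - t0 + \<tau>) x - m)) Pt Px Pxx t0 T"
proof -
  define G where "G t x = damped_gaussian d \<kappa> x0 (t - t0 + \<tau>) x" for t x
  define S where "S t = t - t0 + \<tau>" for t
  have S: "0 < S t" "1 / (2 * S t) \<le> \<kappa>" "\<alpha> \<le> x0 / (2 * S t)" "\<alpha> \<le> (1 - x0) / (2 * S t)"
    if "t \<in> {t0<..T}" for t
  proof -
    show "0 < S t"
      using that \<open>0 < \<tau>\<close> by (simp add: S_def)
    have "1 / (2 * S t) \<le> 1 / (2 * \<tau>)"
      using that \<open>0 < \<tau>\<close> by (simp add: S_def frac_le)
    then show "1 / (2 * S t) \<le> \<kappa>"
      using assms(4) by linarith
    have "S t \<le> x0 / (2 * \<alpha>)" "S t \<le> (1 - x0) / (2 * \<alpha>)"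
      using that assms(7,8) by (auto simp: S_def)
    then show "\<alpha> \<le> x0 / (2 * S t)" "\<alpha> \<le> (1 - x0) / (2 * S t)"
      using \<open>0 < \<alpha>\<close> \<open>0 < S t\<close> by (simp_all add: field_simps)
  qed
  show ?thesis
    unfolding heat_robin_sub_def
  proof (rule exI[where x = "\<lambda>t x. \<delta> * (G t x * ((x - x0)^2 / (4 * d * (S t)^2) - \<kappa>))"],
      rule exI[where x = "\<lambda>t x. \<delta> * (G t x * (- (x - x0) / (2 * d * S t)))"],
      rule exI[where x = "\<lambda>t x. \<delta> * (G t x * ((x - x0)^2 / (4 * d^2 * (S t)^2) - 1 / (2 * d * S t)))"],
      intro conjI ballI)
    show "continuous_on ({t0..T} \<times> {0..1}) (\<lambda>(t, x). \<delta> * (damped_gaussian d \<kappa> x0 (t - t0 + \<tau>) x - m))"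
      unfolding damped_gaussian_def case_prod_beta' using assms(1,3)
      by (intro continuous_intros) (auto simp: add_pos_nonneg)
  next
    fix t x assume t: "t \<in> {t0<..T}"
    have "((\<lambda>s. damped_gaussian d \<kappa> x0 (s - t0 + \<tau>) x) has_real_derivative
        G t x * ((x - x0)^2 / (4 * d * (S t)^2) - \<kappa>) * 1) (at t)"
      unfolding G_def S_def
      by (rule DERIV_chain2[OF damped_gaussian_has_derivative_time])
        (use S(1)[OF t] \<open>0 < d\<close> in \<open>auto simp: S_def intro!: derivative_eq_intros\<close>)
    then show "((\<lambda>s. \<delta> * (damped_gaussian d \<kappa> x0 (s - t0 + \<tau>) x - m)) has_real_derivative
        \<delta> * (G t x * ((x - x0)^2 / (4 * d * (S t)^2) - \<kappa>))) (at t)"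
      by (auto intro!: derivative_eq_intros)
    show "((\<lambda>x. \<delta> * (G t x * (- (x - x0) / (2 * d * S t)))) has_real_derivative
        \<delta> * (G t x * ((x - x0)^2 / (4 * d^2 * (S t)^2) - 1 / (2 * d * S t)))) (at x)"
      unfolding G_def S_def
      by (intro DERIV_cmult damped_gaussian_has_second_derivative_space)
        (use S(1)[OF t] \<open>0 < d\<close> in \<open>simp_all add: S_def\<close>)
    have "((\<lambda>x. \<delta> * (damped_gaussian d \<kappa> x0 (t - t0 + \<tau>) x - m)) has_real_derivative
        \<delta> * (G t x * (- (x - x0) / (2 * d * S t)) - 0)) (at x)"
      unfolding G_def S_def
      by (intro DERIV_cmult DERIV_diff DERIV_const damped_gaussian_has_derivative_space)
        (use S(1)[OF t] \<open>0 < d\<close> in \<open>simp_all add: S_def\<close>)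
    then show "((\<lambda>x. \<delta> * (damped_gaussian d \<kappa> x0 (t - t0 + \<tau>) x - m)) has_real_derivative
        \<delta> * (G t x * (- (x - x0) / (2 * d * S t)))) (at x within {0..1})"
      by (simp add: has_field_derivative_at_within)
    show "\<delta> * (G t x * ((x - x0)^2 / (4 * d * (S t)^2) - \<kappa>))
        \<le> d * (\<delta> * (G t x * ((x - x0)^2 / (4 * d^2 * (S t)^2) - 1 / (2 * d * S t))))"
      unfolding G_def S_def
      by (rule damped_gaussian_subsolution_ineq) (use S(1,2)[OF t] assms(1,5) in \<open>simp_all add: S_def\<close>)
  next
    fix t assume t: "t \<in> {t0<..T}"
    show "- d * (\<delta> * (G t 0 * (- (0 - x0) / (2 * d * S t))))
        + \<alpha> * (\<delta> * (damped_gaussian d \<kappa> x0 (t - t0 + \<tau>) 0 - m)) \<le> 0"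
      unfolding G_def S_def
      by (rule damped_gaussian_robin_ineq(1)) (use S(1,3,4)[OF t] assms(1,2,5,6) in \<open>simp_all add: S_def\<close>)
    show "d * (\<delta> * (G t 1 * (- (1 - x0) / (2 * d * S t))))
        + \<alpha> * (\<delta> * (damped_gaussian d \<kappa> x0 (t - t0 + \<tau>) 1 - m)) \<le> 0"
      unfolding G_def S_def
      by (rule damped_gaussian_robin_ineq(2)) (use S(1,3,4)[OF t] assms(1,2,5,6) in \<open>simp_all add: S_def\<close>)
  qed
qed

lemma damped_gaussian_below_initial:
  assumes "0 < d" "0 < \<tau>" "0 \<le> \<kappa>" "0 \<le> \<delta>" "0 \<le> r"
    and h: "\<forall>x\<in>{0..1}. 0 \<le> h x" "\<forall>x\<in>{0..1}. \<bar>x - x0\<bar> \<le> r \<longrightarrow> \<delta> \<le> h x"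
  shows "\<forall>x\<in>{0..1}. \<delta> * (damped_gaussian d \<kappa> x0 \<tau> x - damped_gaussian d \<kappa> x0 \<tau> (x0 + r)) \<le> h x"
proof
  fix x :: real assume x: "x \<in> {0..1}"
  let ?m = "damped_gaussian d \<kappa> x0 \<tau> (x0 + r)"
  show "\<delta> * (damped_gaussian d \<kappa> x0 \<tau> x - ?m) \<le> h x"
  proof (cases "\<bar>x - x0\<bar> \<le> r")
    case True
    have "damped_gaussian d \<kappa> x0 \<tau> x \<le> 1"
      by (rule damped_gaussian_le_one[OF assms(1-3)])
    moreover have "0 \<le> ?m"
      by (simp add: damped_gaussian_def)
    ultimately have "damped_gaussian d \<kappa> x0 \<tau> x - ?m \<le> 1"
      by linarith
    then have "\<delta> * (damped_gaussian d \<kappa> x0 \<tau> x - ?m) \<le> \<delta>"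
      using \<open>0 \<le> \<delta>\<close> mult_left_le by blast
    moreover have "\<delta> \<le> h x"
      using h(2) x True by blast
    ultimately show ?thesis
      by linarith
  next
    case False
    then have "damped_gaussian d \<kappa> x0 \<tau> x < ?m"
      using \<open>0 \<le> r\<close> by (intro damped_gaussian_less assms(1,2)) auto
    then have "\<delta> * (damped_gaussian d \<kappa> x0 \<tau> x - ?m) \<le> 0"
      using \<open>0 \<le> \<delta>\<close> by (simp add: mult_nonneg_nonpos)
    moreover have "0 \<le> h x"
      using h(1) x by blast
    ultimately show ?thesis
      by linarith
  qed
qed

lemma damped_gaussian_spread:
  assumes "0 < d" "0 < r" "0 < s" "s < r^2 / (4 * d)" "\<bar>x - x0\<bar> \<le> 1"
  defines "\<tau> \<equiv> s * r^2 / 2"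
  shows "damped_gaussian d (1 / (2 * \<tau>)) x0 \<tau> (x0 + r) < damped_gaussian d (1 / (2 * \<tau>)) x0 (s + \<tau>) x"
proof -
  have "0 < \<tau>"
    using assms(2,3) by (simp add: \<tau>_def)
  have "(x - x0)^2 \<le> 1"
    using abs_le_square_iff[of "x - x0" 1] assms(5) by simp
  then have "(x - x0)^2 / (4 * d * (s + \<tau>)) \<le> 1 / (4 * d * s)"
    using assms(1,3) \<open>0 < \<tau>\<close> by (intro frac_le) auto
  moreover have "1 / r^2 < 1 / (4 * d * s)"
    using assms(1-4) by (intro frac_less2) (auto simp: field_simps)
  moreover have "1 / (2 * \<tau>) * (s + \<tau>) = 1 / 2 + 1 / r^2" "1 / (2 * \<tau>) * \<tau> = 1 / 2"
    "r^2 / (4 * d * \<tau>) = 2 * (1 / (4 * d * s))"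
    using assms(1-3) by (simp_all add: \<tau>_def field_simps)
  ultimately have "- (r^2 / (4 * d * \<tau>)) - 1 / (2 * \<tau>) * \<tau>
      < - ((x - x0)^2 / (4 * d * (s + \<tau>))) - 1 / (2 * \<tau>) * (s + \<tau>)"
    by linarith
  then show ?thesis
    by (simp add: damped_gaussian_def)
qed

lemma heat_robin_super_pos_after:
  assumes w: "heat_robin_super d \<alpha> g0 g1 w wt wx wxx t0 (t0 + s)" and "0 < d" "0 < \<alpha>"
    and g: "\<forall>t\<in>{t0<..t0 + s}. 0 \<le> g0 t \<and> 0 \<le> g1 t"
    and r: "0 < r" "r \<le> x0" "x0 + r \<le> 1" and "0 < \<delta>"
    and init: "\<forall>x\<in>{0..1}. 0 \<le> w t0 x" "\<forall>x\<in>{0..1}. \<bar>x - x0\<bar> \<le> r \<longrightarrow> \<delta> \<le> w t0 x"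
    and s: "0 < s" "s < r^2 / (4 * d)" "s \<le> r / (4 * \<alpha>)"
  shows "\<forall>x\<in>{0..1}. 0 < w (t0 + s) x"
proof -
  \<comment> \<open>The Gaussian started at time \<open>t0 - \<tau>\<close> lies below \<open>w t0\<close>, and by time \<open>t0 + s\<close> it has
    spread above its initial level at distance \<open>r\<close> on all of \<open>[0,1]\<close>.\<close>
  define \<tau> where "\<tau> = s * r^2 / 2"
  define \<kappa> where "\<kappa> = 1 / (2 * \<tau>)"
  define m where "m = damped_gaussian d \<kappa> x0 \<tau> (x0 + r)"
  define P where "P t x = \<delta> * (damped_gaussian d \<kappa> x0 (t - t0 + \<tau>) x - m)" for t x
  have "r^2 \<le> 1"
    using r by (simp add: power_le_one)
  then have \<tau>: "0 < \<tau>" "\<tau> \<le> s"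
    using s r by (auto simp: \<tau>_def)
  have "2 * \<alpha> * (s + \<tau>) \<le> 2 * \<alpha> * (2 * s)"
    using \<tau> \<open>0 < \<alpha>\<close> by (intro mult_left_mono) auto
  also have "\<dots> \<le> r"
    using s(3) \<open>0 < \<alpha>\<close> by (simp add: field_simps)
  finally have "s + \<tau> \<le> x0 / (2 * \<alpha>)" "s + \<tau> \<le> (1 - x0) / (2 * \<alpha>)"
    using r \<open>0 < \<alpha>\<close> by (simp_all add: pos_le_divide_eq mult.commute)
  then have "\<exists>Pt Px Pxx. heat_robin_sub d \<alpha> (\<lambda>_. 0) (\<lambda>_. 0) P Pt Px Pxx t0 (t0 + s)"
    unfolding P_def using \<open>0 < d\<close> \<open>0 < \<alpha>\<close> \<open>0 < \<tau>\<close> \<open>0 < \<delta>\<close>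
    by (intro damped_gaussian_barrier) (simp_all add: \<kappa>_def m_def damped_gaussian_def)
  then obtain Pt Px Pxx where P: "heat_robin_sub d \<alpha> (\<lambda>_. 0) (\<lambda>_. 0) P Pt Px Pxx t0 (t0 + s)"
    by blast
  have "\<forall>x\<in>{0..1}. P t0 x \<le> w t0 x"
    using damped_gaussian_below_initial[OF \<open>0 < d\<close> \<open>0 < \<tau>\<close> _ _ _ init] \<tau> \<open>0 < \<delta>\<close> r
    by (simp add: P_def m_def \<kappa>_def)
  then have below: "\<forall>t\<in>{t0..t0 + s}. \<forall>x\<in>{0..1}. P t x \<le> w t x"
    by (intro heat_robin_comparison[OF w P \<open>0 < d\<close> \<open>0 < \<alpha>\<close>]) (use g in auto)
  show ?thesis
  proof
    fix x :: real assume x: "x \<in> {0..1}"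
    have "m < damped_gaussian d \<kappa> x0 (s + \<tau>) x"
      unfolding m_def \<kappa>_def \<tau>_def using x r by (intro damped_gaussian_spread \<open>0 < d\<close> s(1,2)) auto
    then have "0 < P (t0 + s) x"
      using \<open>0 < \<delta>\<close> by (simp add: P_def)
    moreover have "P (t0 + s) x \<le> w (t0 + s) x"
      using below x \<open>0 < s\<close> by auto
    ultimately show "0 < w (t0 + s) x"
      by linarith
  qed
qed

lemma continuous_on_Icc_half_lower_bound:
  fixes h :: "real \<Rightarrow> real"
  assumes "continuous_on {0..1} h" and x1: "x1 \<in> {0..1}" and "0 < h x1"
  obtains x0 r where "0 < r" "r \<le> x0" "x0 + r \<le> 1"
    and "\<forall>x\<in>{0..1}. \<bar>x - x0\<bar> \<le> r \<longrightarrow> h x1 / 2 \<le> h x"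
proof -
  obtain e where "0 < e" and e: "\<forall>y\<in>{0..1}. dist y x1 < e \<longrightarrow> dist (h y) (h x1) < h x1 / 2"
    using assms unfolding continuous_on_iff by (metis half_gt_zero)
  define r where "r = min e (1 / 2) / 4"
  define x0 where "x0 = (if x1 \<le> 1 / 2 then x1 + 2 * r else x1 - 2 * r)"
  have r: "0 < r" "r \<le> 1 / 8" "4 * r \<le> e"
    using \<open>0 < e\<close> by (auto simp: r_def)
  show thesis
  proof (rule that)
    show "0 < r" "r \<le> x0" "x0 + r \<le> 1"
      using r x1 by (auto simp: x0_def)
    show "\<forall>x\<in>{0..1}. \<bar>x - x0\<bar> \<le> r \<longrightarrow> h x1 / 2 \<le> h x"
    proof (intro ballI impI)
      fix x :: real assume x: "x \<in> {0..1}" "\<bar>x - x0\<bar> \<le> r"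
      then have "dist x x1 < e"
        using r by (auto simp: x0_def dist_real_def split: if_splits)
      then have "\<bar>h x - h x1\<bar> < h x1 / 2"
        using e x by (simp add: dist_real_def)
      then show "h x1 / 2 \<le> h x"
        by linarith
    qed
  qed
qed

lemma heat_robin_super_pos:
  assumes w: "heat_robin_super d \<alpha> g0 g1 w wt wx wxx t0 T" and "0 < d" "0 < \<alpha>"
    and g: "\<forall>t\<in>{t0<..T}. 0 \<le> g0 t \<and> 0 \<le> g1 t"
    and nonneg: "\<forall>x\<in>{0..1}. 0 \<le> w t0 x" and x1: "x1 \<in> {0..1}" "0 < w t0 x1"
  shows "\<forall>t\<in>{t0<..T}. \<forall>x\<in>{0..1}. 0 < w t x"
proof (intro ballI)
  fix t x assume t: "t \<in> {t0<..T}" and x: "x \<in> {0..1::real}"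
  have "continuous_on {0..1} (w t0)"
    using heat_robin_super_continuous_slice[OF w] t by simp
  then obtain x0 r where r: "0 < r" "r \<le> x0" "x0 + r \<le> 1"
    and near: "\<forall>x\<in>{0..1}. \<bar>x - x0\<bar> \<le> r \<longrightarrow> w t0 x1 / 2 \<le> w t0 x"
    using x1 by (rule continuous_on_Icc_half_lower_bound)
  define s where "s = min (t - t0) (min (r^2 / (8 * d)) (r / (4 * \<alpha>)))"
  have "r^2 / (8 * d) < r^2 / (4 * d)"
    using r \<open>0 < d\<close> by (simp add: frac_less2)
  then have s: "0 < s" "s < r^2 / (4 * d)" "s \<le> r / (4 * \<alpha>)" "t0 + s \<le> t"
    using t r \<open>0 < d\<close> \<open>0 < \<alpha>\<close> by (auto simp: s_def)
  have w1: "heat_robin_super d \<alpha> g0 g1 w wt wx wxx t0 (t0 + s)"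
    using heat_robin_super_subinterval[OF w, of t0 "t0 + s"] s t by simp
  have g1: "\<forall>t\<in>{t0<..t0 + s}. 0 \<le> g0 t \<and> 0 \<le> g1 t"
    using g s t by auto
  have "\<forall>x\<in>{0..1}. 0 < w (t0 + s) x"
    by (rule heat_robin_super_pos_after[OF w1 \<open>0 < d\<close> \<open>0 < \<alpha>\<close> g1 r _ nonneg near s(1-3)])
      (use x1 in simp)
  moreover have w2: "heat_robin_super d \<alpha> g0 g1 w wt wx wxx (t0 + s) T"
    using heat_robin_super_subinterval[OF w, of "t0 + s" T] s by simp
  moreover have "t0 + s \<le> T"
    using s t by simp
  moreover have "\<forall>t\<in>{t0 + s<..T}. 0 \<le> g0 t \<and> 0 \<le> g1 t"
    using g s by auto
  ultimately have "\<forall>t'\<in>{t0 + s..T}. \<forall>x\<in>{0..1}. 0 < w t' x"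
    using heat_robin_super_pos_forward[OF w2 \<open>0 < d\<close> \<open>0 < \<alpha>\<close>] by blast
  then show "0 < w t x"
    using s t x by auto
qed

section \<open>The lattice system\<close>

lemma linear_ode_ineq_pos:
  fixes r dr q :: "real \<Rightarrow> real"
  assumes "0 < T" and r: "\<forall>t\<in>{0..T}. (r has_real_derivative dr t) (at t within {0..T})"
    and ineq: "\<forall>t\<in>{0<..T}. q t - K * r t \<le> dr t"
    and q: "\<forall>t\<in>{0<..T}. 0 \<le> q t" and "0 \<le> r 0"
    and pos: "0 < r 0 \<or> (\<forall>t\<in>{0<..T}. 0 < q t)"
  shows "0 < r T"
proof -
  define g where "g t = exp (K * t) * r t" for t
  have "continuous_on {0..T} r"
    using r by (intro DERIV_continuous_on[of _ _ dr]) auto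
  then have cont: "continuous_on {0..T} g"
    unfolding g_def by (intro continuous_intros)
  have dg: "(g has_real_derivative exp (K * t) * (K * r t + dr t)) (at t)"
    and dg_ge: "exp (K * t) * q t \<le> exp (K * t) * (K * r t + dr t)" if "0 < t" "t < T" for t
  proof -
    have "(r has_real_derivative dr t) (at t within {0..T})"
      using r that by simp
    then have "(r has_real_derivative dr t) (at t)"
      using that by (simp add: at_within_Icc_at)
    then show "(g has_real_derivative exp (K * t) * (K * r t + dr t)) (at t)"
      unfolding g_def by (auto intro!: derivative_eq_intros simp: algebra_simps)
    show "exp (K * t) * q t \<le> exp (K * t) * (K * r t + dr t)"
      using ineq[rule_format, of t] that by (intro mult_left_mono) auto
  qed
  have "0 < g T"
    using pos
  proof
    assume "0 < r 0"
    moreover have "g 0 \<le> g T"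
    proof (rule DERIV_nonneg_imp_increasing_open[OF less_imp_le[OF \<open>0 < T\<close>] _ cont])
      fix t assume "0 < t" "t < T"
      then have "0 \<le> exp (K * t) * q t"
        using q by simp
      with \<open>0 < t\<close> \<open>t < T\<close> show "\<exists>y. (g has_real_derivative y) (at t) \<and> 0 \<le> y"
        using dg dg_ge by (meson order_trans)
    qed
    ultimately show ?thesis
      by (simp add: g_def)
  next
    assume q_pos: "\<forall>t\<in>{0<..T}. 0 < q t"
    have "g 0 < g T"
    proof (rule DERIV_pos_imp_increasing_open[OF \<open>0 < T\<close> _ cont])
      fix t assume "0 < t" "t < T"
      then have "0 < exp (K * t) * q t"
        using q_pos by simp
      with \<open>0 < t\<close> \<open>t < T\<close> show "\<exists>y. (g has_real_derivative y) (at t) \<and> 0 < y"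
        using dg dg_ge by (meson less_le_trans)
    qed
    then show ?thesis
      using \<open>0 \<le> r 0\<close> by (simp add: g_def)
  qed
  then show ?thesis
    by (simp add: g_def zero_less_mult_iff)
qed

definition lattice_weight :: "int \<Rightarrow> real" where
  "lattice_weight j = 1 + (real_of_int j)^2"

lemma lattice_weight_ge_one: "1 \<le> lattice_weight j"
  by (simp add: lattice_weight_def)

lemma finite_lattice_weight_le: "finite {j. lattice_weight j \<le> C}"
proof (rule finite_subset)
  show "{j. lattice_weight j \<le> C} \<subseteq> {-\<lceil>C\<rceil>..\<lceil>C\<rceil>}"
  proof
    fix j assume "j \<in> {j. lattice_weight j \<le> C}"
    then have "1 + (real_of_int j)^2 \<le> C"
      by (simp add: lattice_weight_def)
    moreover have "\<bar>j\<bar> \<le> j^2"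
    proof (cases "j = 0")
      case False
      then have "\<bar>j\<bar> * 1 \<le> \<bar>j\<bar> * \<bar>j\<bar>"
        by (intro mult_left_mono) auto
      then show ?thesis
        by (simp add: power2_eq_square)
    qed simp
    then have "real_of_int \<bar>j\<bar> \<le> (real_of_int j)^2"
      by (metis of_int_le_iff of_int_power)
    ultimately have "real_of_int \<bar>j\<bar> \<le> C"
      by linarith
    then have "\<bar>j\<bar> \<le> \<lceil>C\<rceil>"
      by (simp add: le_ceiling_iff)
    then show "j \<in> {-\<lceil>C\<rceil>..\<lceil>C\<rceil>}"
      by auto
  qed
qed simp

(* The inequalities satisfied by w = vu - vl and r = ru - rl, with L a Lipschitz constant of f on
   the range of rl and ru. *)
definition lattice_robin_super ::
  "real \<Rightarrow> real \<Rightarrow> real \<Rightarrow> real \<Rightarrow> (int \<Rightarrow> real \<Rightarrow> real \<Rightarrow> real) \<Rightarrow> (int \<Rightarrow> real \<Rightarrow> real) \<Rightarrow>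
   real \<Rightarrow> bool" where
  "lattice_robin_super d \<alpha> \<beta> L w r T \<longleftrightarrow>
    (\<forall>j. \<exists>wt wx wxx. heat_robin_super d \<alpha> (\<lambda>t. \<beta> * r j t) (\<lambda>t. \<beta> * r (j + 1) t) (w j) wt wx wxx 0 T) \<and>
    (\<forall>j. \<exists>dr. \<forall>t\<in>{0..T}. (r j has_real_derivative dr t) (at t within {0..T}) \<and>
       (0 < t \<longrightarrow> \<alpha> * (w j t 0 + w (j - 1) t 1) - L * \<bar>r j t\<bar> - 2 * \<beta> * r j t \<le> dr t))"

lemma lattice_robin_super_continuous:
  assumes "lattice_robin_super d \<alpha> \<beta> L w r T"
  shows "continuous_on ({0..T} \<times> {0..1}) (\<lambda>(t, x). w j t x)" and "continuous_on {0..T} (r j)"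
proof -
  show "continuous_on ({0..T} \<times> {0..1}) (\<lambda>(t, x). w j t x)"
    using assms unfolding lattice_robin_super_def heat_robin_super_def by blast
  obtain dr where "\<forall>t\<in>{0..T}. (r j has_real_derivative dr t) (at t within {0..T})"
    using assms unfolding lattice_robin_super_def by blast
  then show "continuous_on {0..T} (r j)"
    by (intro DERIV_continuous_on[of _ _ dr]) auto
qed

lemma lattice_perturbation_pos_outside_finite:
  fixes w :: "int \<Rightarrow> real \<Rightarrow> real \<Rightarrow> real" and r :: "int \<Rightarrow> real \<Rightarrow> real"
  assumes bound: "\<forall>j. \<forall>t\<in>{0..T}. \<forall>x\<in>{0..1}. \<bar>w j t x\<bar> \<le> M \<and> \<bar>r j t\<bar> \<le> M"
    and E: "\<forall>t\<in>{0..T}. e \<le> E t" "0 < e"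
    and a: "\<forall>j. c * lattice_weight j \<le> a j" "0 < c" "c \<le> 1"
  obtains J where "finite J"
    and "\<forall>j. j \<notin> J \<longrightarrow> (\<forall>t\<in>{0..T}. (\<forall>x\<in>{0..1}. 0 < w j t x + E t * a j) \<and> 0 < r j t + E t * lattice_weight j)"
proof
  show "finite {j. lattice_weight j \<le> M / (e * c)}"
    by (rule finite_lattice_weight_le)
  have lower: "M < E t * a j" "M < E t * lattice_weight j"
    if "j \<notin> {j. lattice_weight j \<le> M / (e * c)}" "t \<in> {0..T}" for j t
  proof -
    have big: "M < e * (c * lattice_weight j)"
      using that(1) E(2) a(2) by (simp add: field_simps)
    have "0 \<le> c * lattice_weight j"
      using a(2) lattice_weight_ge_one[of j] by simp
    moreover have "c * lattice_weight j \<le> lattice_weight j"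
      using a(3) lattice_weight_ge_one[of j] by (simp add: mult_left_le_one_le)
    moreover have "e \<le> E t"
      using E(1) that(2) by blast
    ultimately have "e * (c * lattice_weight j) \<le> E t * a j" "e * (c * lattice_weight j) \<le> E t * lattice_weight j"
      using E(2) a(1) by (auto intro!: mult_mono)
    with big show "M < E t * a j" "M < E t * lattice_weight j"
      by linarith+
  qed
  show "\<forall>j. j \<notin> {j. lattice_weight j \<le> M / (e * c)} \<longrightarrow>
      (\<forall>t\<in>{0..T}. (\<forall>x\<in>{0..1}. 0 < w j t x + E t * a j) \<and> 0 < r j t + E t * lattice_weight j)"
  proof (intro allI impI ballI conjI)
    fix j t x assume j: "j \<notin> {j. lattice_weight j \<le> M / (e * c)}" and t: "t \<in> {0..T}" and "x \<in> {0..1::real}"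
    then have "\<bar>w j t x\<bar> \<le> M"
      using bound by blast
    then have "- w j t x \<le> M"
      by (rule abs_le_D2)
    then show "0 < w j t x + E t * a j"
      using lower(1)[OF j t] by linarith
  next
    fix j t assume j: "j \<notin> {j. lattice_weight j \<le> M / (e * c)}" and t: "t \<in> {0..T}"
    have "\<bar>r j t\<bar> \<le> M"
      using bspec[OF bspec[OF spec[OF bound, of j] t], of 0] by simp
    then have "- r j t \<le> M"
      by (rule abs_le_D2)
    then show "0 < r j t + E t * lattice_weight j"
      using lower(2)[OF j t] by linarith
  qed
qed

lemma lattice_heat_component_no_touch:
  assumes sys: "lattice_robin_super d \<alpha> \<beta> L w r T" and "0 < \<beta>" "0 < d"
    and ts: "0 < ts" "ts \<le> T" and x0: "x0 \<in> {0..1}"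
    and E: "(E has_real_derivative E') (at ts)" "0 < E'" "0 < E ts" and "0 < a"
    and a: "\<alpha> * a = \<beta> * lattice_weight j + \<beta> * lattice_weight (j + 1)"
    and zero: "w j ts x0 + E ts * a = 0"
    and above: "\<forall>y\<in>{0..1}. 0 \<le> w j ts y + E ts * a"
    and before: "\<forall>s\<in>{0..<ts}. 0 \<le> w j s x0 + E s * a"
    and rho: "\<forall>k. - (E ts * lattice_weight k) \<le> r k ts"
  shows False
proof -
  obtain wt wx wxx where W: "heat_robin_super d \<alpha> (\<lambda>t. \<beta> * r j t) (\<lambda>t. \<beta> * r (j + 1) t) (w j) wt wx wxx 0 T"
    using sys unfolding lattice_robin_super_def by blast
  have lw: "0 < lattice_weight k" for k
    using lattice_weight_ge_one[of k] by linarith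
  have rho_b: "\<beta> * - (E ts * lattice_weight k) \<le> \<beta> * r k ts" for k
    using rho \<open>0 < \<beta>\<close> by (intro mult_left_mono) auto
  have pos_b: "0 < \<beta> * (E ts * lattice_weight k)" for k
    using \<open>0 < \<beta>\<close> E(3) lw by simp
  have "- \<alpha> * (E ts * a) = - (E ts * (\<alpha> * a))"
    by (simp add: algebra_simps)
  then have "- \<alpha> * (E ts * a) = \<beta> * - (E ts * lattice_weight j) - \<beta> * (E ts * lattice_weight (j + 1))"
    "- \<alpha> * (E ts * a) = \<beta> * - (E ts * lattice_weight (j + 1)) - \<beta> * (E ts * lattice_weight j)"
    unfolding a by (simp_all add: algebra_simps)
  then have "- \<alpha> * (E ts * a) < \<beta> * r j ts" "- \<alpha> * (E ts * a) < \<beta> * r (j + 1) ts"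
    using rho_b[of j] rho_b[of "j + 1"] pos_b[of j] pos_b[of "j + 1"] by linarith+
  moreover have "((\<lambda>t. E t * a) has_real_derivative E' * a) (at ts)"
    using E(1) by (auto intro!: derivative_eq_intros)
  ultimately show False
    using heat_robin_super_no_touch[OF W \<open>0 < d\<close> ts x0, of "\<lambda>t. E t * a" "E' * a"] E(2) \<open>0 < a\<close>
      zero above before by simp
qed

lemma lattice_rho_component_no_touch:
  assumes sys: "lattice_robin_super d \<alpha> \<beta> L w r T" and "0 < \<alpha>" "0 < \<beta>"
    and ts: "0 < ts" "ts \<le> T"
    and E: "(E has_real_derivative (L + 4 * \<beta> + 1) * E ts) (at ts)" "0 < E ts"
    and a: "\<alpha> * a j + \<alpha> * a (j - 1) = \<beta> * (4 * lattice_weight j + 2)"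
    and zero: "r j ts + E ts * lattice_weight j = 0"
    and before: "\<forall>s\<in>{0..<ts}. 0 \<le> r j s + E s * lattice_weight j"
    and heat: "- (E ts * a j) \<le> w j ts 0" "- (E ts * a (j - 1)) \<le> w (j - 1) ts 1"
  shows False
proof -
  define W where "W = lattice_weight j"
  obtain dr where dr: "\<forall>t\<in>{0..T}. (r j has_real_derivative dr t) (at t within {0..T}) \<and>
      (0 < t \<longrightarrow> \<alpha> * (w j t 0 + w (j - 1) t 1) - L * \<bar>r j t\<bar> - 2 * \<beta> * r j t \<le> dr t)"
    using sys unfolding lattice_robin_super_def by blast
  have "(r j has_real_derivative dr ts) (at ts within {0..T})"
    using dr ts by auto
  then have "(r j has_real_derivative dr ts) (at ts within {0..ts})"
    by (rule DERIV_subset) (use ts in auto)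
  moreover have "(E has_real_derivative (L + 4 * \<beta> + 1) * E ts) (at ts within {0..ts})"
    using E(1) by (rule has_field_derivative_at_within)
  ultimately have deriv: "((\<lambda>t. r j t + E t * W) has_real_derivative dr ts + (L + 4 * \<beta> + 1) * E ts * W)
      (at ts within {0..ts})"
    by (auto intro!: derivative_eq_intros)
  have "\<forall>s\<in>{0..<ts}. r j ts + E ts * W \<le> r j s + E s * W"
    using before zero by (simp add: W_def)
  then have slope: "dr ts + (L + 4 * \<beta> + 1) * E ts * W \<le> 0"
    by (rule has_real_derivative_nonpos_at_left_min[OF deriv ts(1)])
  have "- (E ts * a j) - E ts * a (j - 1) \<le> w j ts 0 + w (j - 1) ts 1"
    using heat by linarith
  then have "\<alpha> * (- (E ts * a j) - E ts * a (j - 1)) \<le> \<alpha> * (w j ts 0 + w (j - 1) ts 1)"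
    using \<open>0 < \<alpha>\<close> by (intro mult_left_mono) auto
  moreover have "\<alpha> * (- (E ts * a j) - E ts * a (j - 1)) = - (E ts * (\<alpha> * a j + \<alpha> * a (j - 1)))"
    by (simp add: algebra_simps)
  moreover have "\<alpha> * (w j ts 0 + w (j - 1) ts 1) - L * \<bar>r j ts\<bar> - 2 * \<beta> * r j ts \<le> dr ts"
    using dr ts by auto
  moreover have "E ts * (\<alpha> * a j + \<alpha> * a (j - 1)) = E ts * (\<beta> * (4 * W + 2))"
    using a by (simp add: W_def)
  moreover have r_eq: "r j ts = - (E ts * W)"
    using zero by (simp add: W_def)
  have "0 < E ts * W"
    using E(2) lattice_weight_ge_one[of j] by (simp add: W_def)
  then have "L * \<bar>r j ts\<bar> = L * (E ts * W)"
    using r_eq by simp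
  moreover have "2 * \<beta> * r j ts = - (2 * \<beta> * (E ts * W))"
    using r_eq by simp
  ultimately have "- (E ts * (\<beta> * (4 * W + 2))) - L * (E ts * W) + 2 * \<beta> * (E ts * W) \<le> dr ts"
    by linarith
  moreover have "(2 * \<beta> + 1) * 1 \<le> (2 * \<beta> + 1) * W"
    using \<open>0 < \<beta>\<close> lattice_weight_ge_one[of j] by (intro mult_left_mono) (auto simp: W_def)
  then have "0 < E ts * ((2 * \<beta> + 1) * W - 2 * \<beta>)"
    using E(2) by simp
  moreover have "- (E ts * (\<beta> * (4 * W + 2))) - L * (E ts * W) + 2 * \<beta> * (E ts * W)
      + (L + 4 * \<beta> + 1) * E ts * W = E ts * ((2 * \<beta> + 1) * W - 2 * \<beta>)"
    by (simp add: algebra_simps)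
  ultimately show False
    using slope by linarith
qed

lemma first_touching_time_lattice:
  fixes u :: "int \<Rightarrow> real \<Rightarrow> real \<Rightarrow> real" and \<rho> :: "int \<Rightarrow> real \<Rightarrow> real"
  assumes "finite J" "0 \<le> T"
    and cont: "\<forall>j\<in>J. continuous_on ({0..T} \<times> {0..1}) (\<lambda>(t, x). u j t x) \<and> continuous_on {0..T} (\<rho> j)"
    and init: "\<forall>j. (\<forall>x\<in>{0..1}. 0 < u j 0 x) \<and> 0 < \<rho> j 0"
    and outside: "\<forall>j. j \<notin> J \<longrightarrow> (\<forall>t\<in>{0..T}. (\<forall>x\<in>{0..1}. 0 < u j t x) \<and> 0 < \<rho> j t)"
    and touch: "\<not> (\<forall>j. \<forall>t\<in>{0..T}. (\<forall>x\<in>{0..1}. 0 < u j t x) \<and> 0 < \<rho> j t)"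
  obtains ts j x0 where "0 < ts" "ts \<le> T" "x0 \<in> {0..1}" "u j ts x0 = 0 \<or> \<rho> j ts = 0"
    and "\<forall>j. (\<forall>x\<in>{0..1}. 0 \<le> u j ts x) \<and> 0 \<le> \<rho> j ts"
    and "\<forall>j. \<forall>s\<in>{0..<ts}. (\<forall>x\<in>{0..1}. 0 < u j s x) \<and> 0 < \<rho> j s"
proof -
  define Z where "Z i t x = (case i of Inl j \<Rightarrow> u j t x | Inr j \<Rightarrow> \<rho> j t)" for i :: "int + int" and t x :: real
  have "\<forall>i\<in>Inl ` J \<union> Inr ` J. continuous_on ({0..T} \<times> {0..1}) (\<lambda>(t, x). Z i t x)"
  proof
    fix i assume "i \<in> Inl ` J \<union> Inr ` J"
    then obtain j where "j \<in> J" and "i = Inl j \<or> i = Inr j"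
      by blast
    moreover have "continuous_on ({0..T} \<times> {0..1}) (\<lambda>p. \<rho> j (fst p))"
      by (rule continuous_on_compose2[of "{0..T}" "\<rho> j"])
        (use cont \<open>j \<in> J\<close> in \<open>auto intro: continuous_on_fst continuous_on_id\<close>)
    ultimately show "continuous_on ({0..T} \<times> {0..1}) (\<lambda>(t, x). Z i t x)"
      using cont by (auto simp: Z_def case_prod_beta')
  qed
  moreover have "\<forall>i. \<forall>x\<in>{0..1}. 0 < Z i 0 x"
    using init by (auto simp: Z_def split: sum.split)
  moreover have "\<forall>i. i \<notin> Inl ` J \<union> Inr ` J \<longrightarrow> (\<forall>t\<in>{0..T}. \<forall>x\<in>{0..1}. 0 < Z i t x)"
    using outside by (auto simp: Z_def split: sum.split)
  moreover have "\<exists>j. \<exists>t\<in>{0..T}. (\<exists>x\<in>{0..1}. Z (Inl j) t x \<le> 0) \<or> Z (Inr j) t 0 \<le> 0"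
    using touch by (auto simp: Z_def not_less)
  then have "\<exists>i. \<exists>t\<in>{0..T}. \<exists>x\<in>{0..1}. Z i t x \<le> 0"
    using atLeastAtMost_iff zero_le_one by blast
  ultimately obtain ts i x0 where ts: "0 < ts" "ts \<le> T" and x0: "x0 \<in> {0..1}" "Z i ts x0 = 0"
    and after: "\<forall>i. \<forall>y\<in>{0..1}. 0 \<le> Z i ts y" and before: "\<forall>i. \<forall>s\<in>{0..<ts}. \<forall>y\<in>{0..1}. 0 < Z i s y"
    by (rule first_touching_time[rotated 2]) (use \<open>finite J\<close> \<open>0 \<le> T\<close> in auto)
  have "\<exists>j. u j ts x0 = 0 \<or> \<rho> j ts = 0"
    using x0(2) by (cases i) (auto simp: Z_def)
  moreover have "\<forall>j. (\<forall>x\<in>{0..1}. 0 \<le> u j ts x) \<and> 0 \<le> \<rho> j ts"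
    using spec[OF after, of "Inl _"] bspec[OF spec[OF after, of "Inr _"], of 0] by (simp add: Z_def)
  moreover have "\<forall>j. \<forall>s\<in>{0..<ts}. (\<forall>x\<in>{0..1}. 0 < u j s x) \<and> 0 < \<rho> j s"
  proof (intro allI ballI conjI)
    fix j s x assume "s \<in> {0..<ts}" "x \<in> {0..1::real}"
    then show "0 < u j s x"
      using bspec[OF bspec[OF spec[OF before, of "Inl j"] \<open>s \<in> _\<close>] \<open>x \<in> _\<close>] by (simp add: Z_def)
  next
    fix j s assume "s \<in> {0..<ts}"
    then show "0 < \<rho> j s"
      using bspec[OF bspec[OF spec[OF before, of "Inr j"] \<open>s \<in> _\<close>], of 0] by (simp add: Z_def)
  qed
  ultimately show thesis
    using that ts x0(1) by blast
qed

lemma lattice_robin_super_perturbed_pos: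
  fixes w :: "int \<Rightarrow> real \<Rightarrow> real \<Rightarrow> real" and r :: "int \<Rightarrow> real \<Rightarrow> real"
  assumes "0 < \<alpha>" "0 < \<beta>" "0 < d" "0 \<le> L" "0 < \<epsilon>" "0 \<le> T"
    and sys: "lattice_robin_super d \<alpha> \<beta> L w r T"
    and bound: "\<forall>j. \<forall>t\<in>{0..T}. \<forall>x\<in>{0..1}. \<bar>w j t x\<bar> \<le> M \<and> \<bar>r j t\<bar> \<le> M"
    and init: "\<forall>j. (\<forall>x\<in>{0..1}. 0 \<le> w j 0 x) \<and> 0 \<le> r j 0"
  defines "a \<equiv> \<lambda>j. \<beta> / \<alpha> * (lattice_weight j + lattice_weight (j + 1))"
    and "E \<equiv> \<lambda>t. \<epsilon> * exp ((L + 4 * \<beta> + 1) * t)"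
  shows "\<forall>j. \<forall>t\<in>{0..T}. (\<forall>x\<in>{0..1}. 0 < w j t x + E t * a j) \<and> 0 < r j t + E t * lattice_weight j"
proof (rule ccontr)
  \<comment> \<open>\<open>\<alpha> * a j\<close> dominates the Robin data of both neighbouring \<open>r\<close>'s, and the rate
    \<open>L + 4 * \<beta> + 1\<close> dominates the coupling in the equation for \<open>r j\<close>.\<close>
  assume neg: "\<not> ?thesis"
  have lw: "0 < lattice_weight j" for j
    using lattice_weight_ge_one[of j] by linarith
  have a: "\<alpha> * a j = \<beta> * lattice_weight j + \<beta> * lattice_weight (j + 1)" for j
    using assms(1) by (simp add: a_def field_simps)
  have "0 < a j" for j
    using assms(1,2) lw[of j] lw[of "j + 1"] unfolding a_def by (intro mult_pos_pos divide_pos_pos add_pos_pos)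
  have E: "0 < E t" "(E has_real_derivative (L + 4 * \<beta> + 1) * E t) (at t)" for t
    using \<open>0 < \<epsilon>\<close> unfolding E_def by (auto intro!: derivative_eq_intros)
  obtain J where "finite J" and outside: "\<forall>j. j \<notin> J \<longrightarrow>
      (\<forall>t\<in>{0..T}. (\<forall>x\<in>{0..1}. 0 < w j t x + E t * a j) \<and> 0 < r j t + E t * lattice_weight j)"
  proof (rule lattice_perturbation_pos_outside_finite[OF bound _ \<open>0 < \<epsilon>\<close>, of E "min 1 (\<beta> / \<alpha>)" a])
    show "\<forall>t\<in>{0..T}. \<epsilon> \<le> E t"
      using \<open>0 < \<epsilon>\<close> assms(2,4) by (auto simp: E_def)
    show "\<forall>j. min 1 (\<beta> / \<alpha>) * lattice_weight j \<le> a j"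
    proof
      fix j
      have "min 1 (\<beta> / \<alpha>) * lattice_weight j \<le> \<beta> / \<alpha> * lattice_weight j"
        using lw[of j] by (intro mult_right_mono) auto
      also have "\<dots> \<le> a j"
        unfolding a_def using lw[of "j + 1"] assms(1,2) by (intro mult_left_mono) auto
      finally show "min 1 (\<beta> / \<alpha>) * lattice_weight j \<le> a j" .
    qed
  qed (use assms(1,2) in auto)
  have cE: "continuous_on {0..T} E" "continuous_on ({0..T} \<times> {0..1}) (\<lambda>p. E (fst p))"
    unfolding E_def by (intro continuous_intros)+
  have "continuous_on ({0..T} \<times> {0..1}) (\<lambda>p. w j (fst p) (snd p) + E (fst p) * a j)" for j
    using lattice_robin_super_continuous(1)[OF sys, of j] continuous_on_mult_right[OF cE(2)]
    by (intro continuous_on_add) (simp_all add: case_prod_beta')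
  moreover have "continuous_on {0..T} (\<lambda>t. r j t + E t * lattice_weight j)" for j
    by (intro continuous_on_add continuous_on_mult_right lattice_robin_super_continuous(2)[OF sys] cE(1))
  ultimately have "\<forall>j\<in>J. continuous_on ({0..T} \<times> {0..1}) (\<lambda>(t, x). w j t x + E t * a j)
      \<and> continuous_on {0..T} (\<lambda>t. r j t + E t * lattice_weight j)"
    by (simp add: case_prod_beta')
  moreover have "\<forall>j. (\<forall>x\<in>{0..1}. 0 < w j 0 x + E 0 * a j) \<and> 0 < r j 0 + E 0 * lattice_weight j"
    using init E(1) \<open>0 < a _\<close> lw by (auto intro!: add_nonneg_pos)
  moreover note outside
  ultimately obtain ts j x0 where ts: "0 < ts" "ts \<le> T" and x0: "x0 \<in> {0..1}"
    and zero: "w j ts x0 + E ts * a j = 0 \<or> r j ts + E ts * lattice_weight j = 0"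
    and after: "\<forall>j. (\<forall>x\<in>{0..1}. 0 \<le> w j ts x + E ts * a j) \<and> 0 \<le> r j ts + E ts * lattice_weight j"
    and before: "\<forall>j. \<forall>s\<in>{0..<ts}. (\<forall>x\<in>{0..1}. 0 < w j s x + E s * a j) \<and> 0 < r j s + E s * lattice_weight j"
    by (rule first_touching_time_lattice[OF \<open>finite J\<close> \<open>0 \<le> T\<close> _ _ _ neg])
  have after_w: "- (E ts * a k) \<le> w k ts y" if "y \<in> {0..1}" for k y
  proof -
    have "0 \<le> w k ts y + E ts * a k"
      using after that by blast
    then show ?thesis
      by linarith
  qed
  have after_r: "- (E ts * lattice_weight k) \<le> r k ts" for k
  proof -
    have "0 \<le> r k ts + E ts * lattice_weight k"
      using after by blast
    then show ?thesis
      by linarith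
  qed
  from zero show False
  proof
    assume zero_w: "w j ts x0 + E ts * a j = 0"
    have "0 < (L + 4 * \<beta> + 1) * E ts"
      using E(1) assms(2,4) by simp
    moreover have "\<forall>y\<in>{0..1}. 0 \<le> w j ts y + E ts * a j"
      using after by blast
    moreover have "\<forall>s\<in>{0..<ts}. 0 \<le> w j s x0 + E s * a j"
      using before x0 by (auto intro: less_imp_le)
    ultimately show False
      by (rule lattice_heat_component_no_touch[OF sys \<open>0 < \<beta>\<close> \<open>0 < d\<close> ts x0 E(2) _ E(1) \<open>0 < a j\<close> a zero_w])
        (use after_r in blast)
  next
    assume zero_r: "r j ts + E ts * lattice_weight j = 0"
    have a_sum: "\<alpha> * a j + \<alpha> * a (j - 1) = \<beta> * (4 * lattice_weight j + 2)"
      using assms(1) by (simp add: a_def lattice_weight_def field_simps power2_eq_square)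
    have "\<forall>s\<in>{0..<ts}. 0 \<le> r j s + E s * lattice_weight j"
      using before by (auto intro: less_imp_le)
    moreover have "- (E ts * a j) \<le> w j ts 0" "- (E ts * a (j - 1)) \<le> w (j - 1) ts 1"
      using after_w by simp_all
    ultimately show False
      by (rule lattice_rho_component_no_touch[OF sys \<open>0 < \<alpha>\<close> \<open>0 < \<beta>\<close> ts E(2) E(1) a_sum zero_r])
  qed
qed

lemma lattice_robin_super_nonneg:
  fixes w :: "int \<Rightarrow> real \<Rightarrow> real \<Rightarrow> real" and r :: "int \<Rightarrow> real \<Rightarrow> real"
  assumes "0 < \<alpha>" "0 < \<beta>" "0 < d"
    and sys: "\<forall>T>0. \<exists>L M. 0 \<le> L \<and> lattice_robin_super d \<alpha> \<beta> L w r T \<and>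
      (\<forall>j. \<forall>t\<in>{0..T}. \<forall>x\<in>{0..1}. \<bar>w j t x\<bar> \<le> M \<and> \<bar>r j t\<bar> \<le> M)"
    and init: "\<forall>j. (\<forall>x\<in>{0..1}. 0 \<le> w j 0 x) \<and> 0 \<le> r j 0"
  shows "\<forall>j. \<forall>t\<ge>0. (\<forall>x\<in>{0..1}. 0 \<le> w j t x) \<and> 0 \<le> r j t"
proof (intro allI impI)
  fix j and t :: real assume "0 \<le> t"
  then have "0 < t + 1" "0 \<le> t + 1" "t \<in> {0..t + 1}"
    by simp_all
  then obtain L M where "0 \<le> L" and lat: "lattice_robin_super d \<alpha> \<beta> L w r (t + 1)"
    and bound: "\<forall>j. \<forall>s\<in>{0..t + 1}. \<forall>x\<in>{0..1}. \<bar>w j s x\<bar> \<le> M \<and> \<bar>r j s\<bar> \<le> M"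
    using sys by blast
  define K where "K = L + 4 * \<beta> + 1"
  define a where "a = \<beta> / \<alpha> * (lattice_weight j + lattice_weight (j + 1))"
  have lw: "0 < lattice_weight k" for k
    using lattice_weight_ge_one[of k] by linarith
  have "0 < a"
    using assms(1,2) lw[of j] lw[of "j + 1"] unfolding a_def by (intro mult_pos_pos divide_pos_pos add_pos_pos)
  have perturbed: "(\<forall>x\<in>{0..1}. 0 < w j t x + \<epsilon> * exp (K * t) * a) \<and> 0 < r j t + \<epsilon> * exp (K * t) * lattice_weight j"
    if "0 < \<epsilon>" for \<epsilon>
    using lattice_robin_super_perturbed_pos[OF assms(1-3) \<open>0 \<le> L\<close> that \<open>0 \<le> t + 1\<close> lat bound init]
      \<open>t \<in> {0..t + 1}\<close> unfolding K_def a_def by blast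
  have "0 \<le> w j t x" if "x \<in> {0..1}" for x
  proof (rule field_le_epsilon)
    fix e :: real assume "0 < e"
    then have "0 < w j t x + e / (exp (K * t) * a) * exp (K * t) * a"
      using perturbed[of "e / (exp (K * t) * a)"] \<open>0 < a\<close> that by simp
    then show "0 \<le> w j t x + e"
      using \<open>0 < a\<close> by simp
  qed
  moreover have "0 \<le> r j t"
  proof (rule field_le_epsilon)
    fix e :: real assume "0 < e"
    then have "0 < r j t + e / (exp (K * t) * lattice_weight j) * exp (K * t) * lattice_weight j"
      using perturbed[of "e / (exp (K * t) * lattice_weight j)"] lw[of j] by simp
    then show "0 \<le> r j t + e"
      using lw[of j] by simp
  qed
  ultimately show "(\<forall>x\<in>{0..1}. 0 \<le> w j t x) \<and> 0 \<le> r j t"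
    by blast
qed

lemma lattice_robin_super_rho_pos:
  assumes "0 < \<alpha>" "0 < \<beta>"
    and sys: "\<forall>T>0. \<exists>L. lattice_robin_super d \<alpha> \<beta> L w r T"
    and nonneg: "\<forall>j. \<forall>t\<ge>0. (\<forall>x\<in>{0..1}. 0 \<le> w j t x) \<and> 0 \<le> r j t"
    and pos: "0 < r j 0 \<or> (\<forall>t>0. 0 < w j t 0) \<or> (\<forall>t>0. 0 < w (j - 1) t 1)"
  shows "\<forall>t>0. 0 < r j t"
proof (intro allI impI)
  fix T :: real assume "0 < T"
  then obtain L dr where dr: "\<forall>t\<in>{0..T}. (r j has_real_derivative dr t) (at t within {0..T}) \<and>
      (0 < t \<longrightarrow> \<alpha> * (w j t 0 + w (j - 1) t 1) - L * \<bar>r j t\<bar> - 2 * \<beta> * r j t \<le> dr t)"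
    using sys unfolding lattice_robin_super_def by blast
  define q where "q t = \<alpha> * (w j t 0 + w (j - 1) t 1)" for t
  have q: "0 \<le> q t" if "0 \<le> t" for t
    using nonneg that \<open>0 < \<alpha>\<close> by (simp add: q_def)
  show "0 < r j T"
  proof (rule linear_ode_ineq_pos[OF \<open>0 < T\<close>, of "r j" dr q "L + 2 * \<beta>"])
    show "\<forall>t\<in>{0<..T}. q t - (L + 2 * \<beta>) * r j t \<le> dr t"
      using dr nonneg by (auto simp: q_def algebra_simps)
    show "0 < r j 0 \<or> (\<forall>t\<in>{0<..T}. 0 < q t)"
      using pos nonneg \<open>0 < \<alpha>\<close> by (fastforce simp: q_def add_pos_nonneg add_nonneg_pos)
  qed (use dr nonneg q in auto)
qed

lemma lattice_robin_super_heat_pos: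
  assumes "0 < \<alpha>" "0 < \<beta>" "0 < d"
    and sys: "\<forall>T>0. \<exists>L. lattice_robin_super d \<alpha> \<beta> L w r T"
    and nonneg: "\<forall>j. \<forall>t\<ge>0. (\<forall>x\<in>{0..1}. 0 \<le> w j t x) \<and> 0 \<le> r j t"
    and pos: "(\<exists>x\<in>{0..1}. 0 < w j 0 x) \<or> (\<forall>t>0. 0 < r j t) \<or> (\<forall>t>0. 0 < r (j + 1) t)"
  shows "\<forall>t>0. \<forall>x\<in>{0..1}. 0 < w j t x"
proof (intro allI impI)
  fix t :: real assume "0 < t"
  then have "\<exists>L. lattice_robin_super d \<alpha> \<beta> L w r t"
    using sys by blast
  then obtain wt wx wxx where W: "heat_robin_super d \<alpha> (\<lambda>t. \<beta> * r j t) (\<lambda>t. \<beta> * r (j + 1) t) (w j) wt wx wxx 0 t"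
    unfolding lattice_robin_super_def by blast
  obtain t0 x1 where t0: "0 \<le> t0" "t0 < t" and x1: "x1 \<in> {0..1}" "0 < w j t0 x1"
  proof (cases "\<exists>x\<in>{0..1}. 0 < w j 0 x")
    case True
    then show ?thesis
      using that[of 0] \<open>0 < t\<close> by blast
  next
    case False
    have "0 < t / 2"
      using \<open>0 < t\<close> by simp
    then have "0 < \<beta> * r j (t / 2) \<or> 0 < \<beta> * r (j + 1) (t / 2)"
      using pos False \<open>0 < \<beta>\<close> by auto
    moreover have "t / 2 \<in> {0<..t}"
      using \<open>0 < t\<close> by simp
    then have "(\<forall>x\<in>{0..1}. w j (t / 2) x = 0) \<longrightarrow> \<beta> * r j (t / 2) \<le> 0 \<and> \<beta> * r (j + 1) (t / 2) \<le> 0"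
      using heat_robin_super_vanishing_slice[OF W] by blast
    ultimately have "\<not> (\<forall>x\<in>{0..1}. w j (t / 2) x = 0)"
      by auto
    then obtain x1 where "x1 \<in> {0..1}" "w j (t / 2) x1 \<noteq> 0"
      by blast
    moreover have "0 \<le> w j (t / 2) x1"
      using nonneg \<open>x1 \<in> {0..1}\<close> \<open>0 < t\<close> by simp
    ultimately show ?thesis
      using that[of "t / 2" x1] \<open>0 < t\<close> by simp
  qed
  have "\<forall>s\<in>{t0<..t}. \<forall>x\<in>{0..1}. 0 < w j s x"
  proof (rule heat_robin_super_pos[OF heat_robin_super_subinterval[OF W t0(1) order_refl] \<open>0 < d\<close> \<open>0 < \<alpha>\<close> _ _ x1])
    show "\<forall>s\<in>{t0<..t}. 0 \<le> \<beta> * r j s \<and> 0 \<le> \<beta> * r (j + 1) s"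
      using nonneg t0 \<open>0 < \<beta>\<close> by simp
    show "\<forall>x\<in>{0..1}. 0 \<le> w j t0 x"
      using nonneg t0 by simp
  qed
  then show "\<forall>x\<in>{0..1}. 0 < w j t x"
    using t0 by simp
qed

lemma lattice_robin_super_pos:
  assumes "0 < \<alpha>" "0 < \<beta>" "0 < d"
    and sys: "\<forall>T>0. \<exists>L. lattice_robin_super d \<alpha> \<beta> L w r T"
    and nonneg: "\<forall>j. \<forall>t\<ge>0. (\<forall>x\<in>{0..1}. 0 \<le> w j t x) \<and> 0 \<le> r j t"
    and init: "(\<exists>j. \<exists>x\<in>{0..1}. w j 0 x \<noteq> 0) \<or> (\<exists>j. r j 0 \<noteq> 0)"
  shows "\<forall>t>0. \<forall>j. (\<forall>x\<in>{0..1}. 0 < w j t x) \<and> 0 < r j t"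
proof -
  have init': "(\<exists>j. \<exists>x\<in>{0..1}. 0 < w j 0 x) \<or> (\<exists>j. 0 < r j 0)"
  proof -
    have "(\<forall>x\<in>{0..1}. 0 \<le> w j 0 x) \<and> 0 \<le> r j 0" for j
      using nonneg order_refl by blast
    then show ?thesis
      using init by (metis order_le_neq_trans)
  qed
  note rho_pos = lattice_robin_super_rho_pos[OF assms(1,2) sys nonneg]
  note heat_pos = lattice_robin_super_heat_pos[OF assms(1-3) sys nonneg]
  define A where "A j \<longleftrightarrow> (\<forall>t>0. \<forall>x\<in>{0..1}. 0 < w j t x)" for j
  have up: "A (j + 1)" if "A j" for j
    using that rho_pos[of "j + 1"] heat_pos[of "j + 1"] by (simp add: A_def)
  have down: "A (j - 1)" if "A j" for j
    using that rho_pos[of j] heat_pos[of "j - 1"] by (simp add: A_def)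
  obtain j0 where "A j0"
    using init' rho_pos heat_pos unfolding A_def by blast
  then have all: "A j" for j
    by (induct j rule: int_induct[of _ j0]) (auto intro: up down)
  show ?thesis
    using all rho_pos unfolding A_def by auto
qed

lemma supersolution_components:
  assumes "supersolution \<alpha> \<beta> d f v \<rho>"
  obtains vt vx vxx d\<rho>
  where "heat_robin_super d \<alpha> (\<lambda>t. \<beta> * \<rho> j t) (\<lambda>t. \<beta> * \<rho> (j + 1) t) (v j) vt vx vxx 0 T"
    and "\<forall>t\<ge>0. (\<rho> j has_real_derivative d\<rho> t) (at t within {0..})"
    and "\<forall>t>0. f (\<rho> j t) + \<alpha> * (v j t 0 + v (j - 1) t 1) - 2 * \<beta> * \<rho> j t \<le> d\<rho> t"
proof -
  obtain vt vx vxx d\<rho> where reg: "reg_derivs v \<rho> vt vx vxx d\<rho>"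
    and ineq: "\<forall>t>0. \<forall>j. (\<forall>x\<in>{0<..<1}. vt j t x \<ge> d * vxx j t x) \<and>
      d\<rho> j t \<ge> f (\<rho> j t) + \<alpha> * (v j t 0 + v (j - 1) t 1) - 2 * \<beta> * \<rho> j t \<and>
      - d * vx j t 0 + \<alpha> * v j t 0 \<ge> \<beta> * \<rho> j t \<and> d * vx j t 1 + \<alpha> * v j t 1 \<ge> \<beta> * \<rho> (j + 1) t"
    using assms unfolding supersolution_def by blast
  have "heat_robin_super d \<alpha> (\<lambda>t. \<beta> * \<rho> j t) (\<lambda>t. \<beta> * \<rho> (j + 1) t) (v j) (vt j) (vx j) (vxx j) 0 T"
    unfolding heat_robin_super_def
  proof (intro conjI)
    show "continuous_on ({0..T} \<times> {0..1}) (\<lambda>(t, x). v j t x)"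
      by (rule continuous_on_subset[of "{0..} \<times> {0..1}"]) (use reg in \<open>auto simp: reg_derivs_def\<close>)
  qed (use reg ineq in \<open>auto simp: reg_derivs_def\<close>)
  then show thesis
    by (rule that) (use reg ineq in \<open>auto simp: reg_derivs_def\<close>)
qed

lemma subsolution_components:
  assumes "subsolution \<alpha> \<beta> d f v \<rho>"
  obtains vt vx vxx d\<rho>
  where "heat_robin_sub d \<alpha> (\<lambda>t. \<beta> * \<rho> j t) (\<lambda>t. \<beta> * \<rho> (j + 1) t) (v j) vt vx vxx 0 T"
    and "\<forall>t\<ge>0. (\<rho> j has_real_derivative d\<rho> t) (at t within {0..})"
    and "\<forall>t>0. d\<rho> t \<le> f (\<rho> j t) + \<alpha> * (v j t 0 + v (j - 1) t 1) - 2 * \<beta> * \<rho> j t"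
proof -
  obtain vt vx vxx d\<rho> where reg: "reg_derivs v \<rho> vt vx vxx d\<rho>"
    and ineq: "\<forall>t>0. \<forall>j. (\<forall>x\<in>{0<..<1}. vt j t x \<le> d * vxx j t x) \<and>
      d\<rho> j t \<le> f (\<rho> j t) + \<alpha> * (v j t 0 + v (j - 1) t 1) - 2 * \<beta> * \<rho> j t \<and>
      - d * vx j t 0 + \<alpha> * v j t 0 \<le> \<beta> * \<rho> j t \<and> d * vx j t 1 + \<alpha> * v j t 1 \<le> \<beta> * \<rho> (j + 1) t"
    using assms unfolding subsolution_def by blast
  have "heat_robin_sub d \<alpha> (\<lambda>t. \<beta> * \<rho> j t) (\<lambda>t. \<beta> * \<rho> (j + 1) t) (v j) (vt j) (vx j) (vxx j) 0 T"
    unfolding heat_robin_sub_def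
  proof (intro conjI)
    show "continuous_on ({0..T} \<times> {0..1}) (\<lambda>(t, x). v j t x)"
      by (rule continuous_on_subset[of "{0..} \<times> {0..1}"]) (use reg in \<open>auto simp: reg_derivs_def\<close>)
  qed (use reg ineq in \<open>auto simp: reg_derivs_def\<close>)
  then show thesis
    by (rule that) (use reg ineq in \<open>auto simp: reg_derivs_def\<close>)
qed

lemma sub_super_difference_lattice:
  assumes sub: "subsolution \<alpha> \<beta> d f vl rl" and sup: "supersolution \<alpha> \<beta> d f vu ru"
    and lip: "L-lipschitz_on S f" and range: "\<forall>j. \<forall>t\<in>{0..T}. rl j t \<in> S \<and> ru j t \<in> S"
  shows "lattice_robin_super d \<alpha> \<beta> L (\<lambda>j t x. vu j t x - vl j t x) (\<lambda>j t. ru j t - rl j t) T"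
  unfolding lattice_robin_super_def
proof (intro conjI allI)
  fix j
  obtain vtu vxu vxxu dru where U: "heat_robin_super d \<alpha> (\<lambda>t. \<beta> * ru j t) (\<lambda>t. \<beta> * ru (j + 1) t) (vu j) vtu vxu vxxu 0 T"
    and dru: "\<forall>t\<ge>0. (ru j has_real_derivative dru t) (at t within {0..})"
      "\<forall>t>0. f (ru j t) + \<alpha> * (vu j t 0 + vu (j - 1) t 1) - 2 * \<beta> * ru j t \<le> dru t"
    by (rule supersolution_components[OF sup])
  obtain vtl vxl vxxl drl where L: "heat_robin_sub d \<alpha> (\<lambda>t. \<beta> * rl j t) (\<lambda>t. \<beta> * rl (j + 1) t) (vl j) vtl vxl vxxl 0 T"
    and drl: "\<forall>t\<ge>0. (rl j has_real_derivative drl t) (at t within {0..})"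
      "\<forall>t>0. drl t \<le> f (rl j t) + \<alpha> * (vl j t 0 + vl (j - 1) t 1) - 2 * \<beta> * rl j t"
    by (rule subsolution_components[OF sub])
  have heat: "heat_robin_super d \<alpha> (\<lambda>t. \<beta> * (ru j t - rl j t)) (\<lambda>t. \<beta> * (ru (j + 1) t - rl (j + 1) t))
      (\<lambda>t x. vu j t x - vl j t x) (\<lambda>t x. vtu t x - vtl t x) (\<lambda>t x. vxu t x - vxl t x) (\<lambda>t x. vxxu t x - vxxl t x) 0 T"
    using heat_robin_super_diff[OF U L] by (simp add: right_diff_distrib)
  then show "\<exists>wt wx wxx. heat_robin_super d \<alpha> (\<lambda>t. \<beta> * (ru j t - rl j t)) (\<lambda>t. \<beta> * (ru (j + 1) t - rl (j + 1) t))
      (\<lambda>t x. vu j t x - vl j t x) wt wx wxx 0 T"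
    by (intro exI) (rule heat)
  have ode: "\<forall>t\<in>{0..T}. ((\<lambda>t. ru j t - rl j t) has_real_derivative dru t - drl t) (at t within {0..T}) \<and>
      (0 < t \<longrightarrow> \<alpha> * (vu j t 0 - vl j t 0 + (vu (j - 1) t 1 - vl (j - 1) t 1))
        - L * \<bar>ru j t - rl j t\<bar> - 2 * \<beta> * (ru j t - rl j t) \<le> dru t - drl t)"
  proof (intro ballI conjI impI)
    fix t assume t: "t \<in> {0..T}"
    have "((\<lambda>t. ru j t - rl j t) has_real_derivative dru t - drl t) (at t within {0..})"
      using dru(1) drl(1) t by (intro DERIV_diff) auto
    then show "((\<lambda>t. ru j t - rl j t) has_real_derivative dru t - drl t) (at t within {0..T})"
      by (rule DERIV_subset) auto
    assume "0 < t"
    have "\<bar>f (ru j t) - f (rl j t)\<bar> \<le> L * \<bar>ru j t - rl j t\<bar>"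
      using lip range t unfolding lipschitz_on_def dist_real_def by blast
    moreover have "f (ru j t) + \<alpha> * (vu j t 0 + vu (j - 1) t 1) - 2 * \<beta> * ru j t \<le> dru t"
      "drl t \<le> f (rl j t) + \<alpha> * (vl j t 0 + vl (j - 1) t 1) - 2 * \<beta> * rl j t"
      using dru(2) drl(2) \<open>0 < t\<close> by auto
    moreover have "\<alpha> * (vu j t 0 - vl j t 0 + (vu (j - 1) t 1 - vl (j - 1) t 1))
        = \<alpha> * (vu j t 0 + vu (j - 1) t 1) - \<alpha> * (vl j t 0 + vl (j - 1) t 1)"
      "2 * \<beta> * (ru j t - rl j t) = 2 * \<beta> * ru j t - 2 * \<beta> * rl j t"
      by (simp_all add: algebra_simps)
    ultimately show "\<alpha> * (vu j t 0 - vl j t 0 + (vu (j - 1) t 1 - vl (j - 1) t 1))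
        - L * \<bar>ru j t - rl j t\<bar> - 2 * \<beta> * (ru j t - rl j t) \<le> dru t - drl t"
      by linarith
  qed
  then show "\<exists>dr. \<forall>t\<in>{0..T}. ((\<lambda>t. ru j t - rl j t) has_real_derivative dr t) (at t within {0..T}) \<and>
      (0 < t \<longrightarrow> \<alpha> * (vu j t 0 - vl j t 0 + (vu (j - 1) t 1 - vl (j - 1) t 1))
        - L * \<bar>ru j t - rl j t\<bar> - 2 * \<beta> * (ru j t - rl j t) \<le> dr t)"
    by (intro exI) (rule ode)
qed

lemma sub_super_difference_bounded_lattice:
  assumes sub: "subsolution \<alpha> \<beta> d f vl rl" and sup: "supersolution \<alpha> \<beta> d f vu ru"
    and bl: "locally_bounded_in_time vl rl" and bu: "locally_bounded_in_time vu ru"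
    and lip: "\<forall>a b. \<exists>L. L-lipschitz_on {a..b} f" and "0 < T"
  obtains L M where "0 \<le> L"
    and "lattice_robin_super d \<alpha> \<beta> L (\<lambda>j t x. vu j t x - vl j t x) (\<lambda>j t. ru j t - rl j t) T"
    and "\<forall>j. \<forall>t\<in>{0..T}. \<forall>x\<in>{0..1}. \<bar>vu j t x - vl j t x\<bar> \<le> M \<and> \<bar>ru j t - rl j t\<bar> \<le> M"
proof -
  obtain Ml where Ml: "\<forall>t\<in>{0..T}. \<forall>j. \<forall>x\<in>{0..1}. \<bar>vl j t x\<bar> + \<bar>rl j t\<bar> \<le> Ml"
    using bl \<open>0 < T\<close> unfolding locally_bounded_in_time_def by blast
  obtain Mu where Mu: "\<forall>t\<in>{0..T}. \<forall>j. \<forall>x\<in>{0..1}. \<bar>vu j t x\<bar> + \<bar>ru j t\<bar> \<le> Mu"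
    using bu \<open>0 < T\<close> unfolding locally_bounded_in_time_def by blast
  have bounds: "\<bar>vl j t x\<bar> + \<bar>rl j t\<bar> \<le> Ml" "\<bar>vu j t x\<bar> + \<bar>ru j t\<bar> \<le> Mu"
    if "t \<in> {0..T}" "x \<in> {0..1}" for j t x
    using Ml Mu that by auto
  have "\<bar>rl j t\<bar> \<le> Ml + Mu" "\<bar>ru j t\<bar> \<le> Ml + Mu" "\<bar>vu j t x - vl j t x\<bar> \<le> Ml + Mu"
    if "t \<in> {0..T}" "x \<in> {0..1}" for j t x
  proof -
    have "\<bar>vl j t x\<bar> + \<bar>rl j t\<bar> \<le> Ml" "\<bar>vu j t x\<bar> + \<bar>ru j t\<bar> \<le> Mu"
      using bounds that by simp_all
    moreover have "\<bar>vu j t x - vl j t x\<bar> \<le> \<bar>vu j t x\<bar> + \<bar>vl j t x\<bar>"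
      by (rule abs_triangle_ineq4)
    ultimately show "\<bar>rl j t\<bar> \<le> Ml + Mu" "\<bar>ru j t\<bar> \<le> Ml + Mu" "\<bar>vu j t x - vl j t x\<bar> \<le> Ml + Mu"
      using abs_ge_zero[of "vl j t x"] abs_ge_zero[of "rl j t"] abs_ge_zero[of "vu j t x"] abs_ge_zero[of "ru j t"]
      by linarith+
  qed
  note bounds' = this
  obtain L where L: "L-lipschitz_on {- (Ml + Mu)..Ml + Mu} f"
    using lip by blast
  show thesis
  proof (rule that)
    show "0 \<le> L"
      using L by (rule lipschitz_on_nonneg)
    have "\<forall>j. \<forall>t\<in>{0..T}. rl j t \<in> {- (Ml + Mu)..Ml + Mu} \<and> ru j t \<in> {- (Ml + Mu)..Ml + Mu}"
    proof (intro allI ballI)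
      fix j t assume "t \<in> {0..T}"
      then have "\<bar>rl j t\<bar> \<le> Ml + Mu" "\<bar>ru j t\<bar> \<le> Ml + Mu"
        using bounds'(1,2)[where j = j and t = t and x = 0] by auto
      then show "rl j t \<in> {- (Ml + Mu)..Ml + Mu} \<and> ru j t \<in> {- (Ml + Mu)..Ml + Mu}"
        by (auto simp: abs_le_iff)
    qed
    then show "lattice_robin_super d \<alpha> \<beta> L (\<lambda>j t x. vu j t x - vl j t x) (\<lambda>j t. ru j t - rl j t) T"
      by (rule sub_super_difference_lattice[OF sub sup L])
    have "\<bar>ru j t - rl j t\<bar> \<le> Ml + Mu" if "t \<in> {0..T}" for j t
      using bounds[of t 0 j] that abs_triangle_ineq4[of "ru j t" "rl j t"]
        abs_ge_zero[of "vl j t 0"] abs_ge_zero[of "vu j t 0"] by simp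
    then show "\<forall>j. \<forall>t\<in>{0..T}. \<forall>x\<in>{0..1}. \<bar>vu j t x - vl j t x\<bar> \<le> Ml + Mu \<and> \<bar>ru j t - rl j t\<bar> \<le> Ml + Mu"
      using bounds'(3) by blast
  qed
qed

theorem proposition2p2:
  fixes \<alpha> \<beta> d :: real and f f' :: "real \<Rightarrow> real"
    and vl vu :: "int \<Rightarrow> real \<Rightarrow> real \<Rightarrow> real" and rl ru :: "int \<Rightarrow> real \<Rightarrow> real"
  assumes "\<alpha> > 0" "\<beta> > 0" "d > 0"
    and f_C1: "\<forall>u\<in>{0..1}. (f has_real_derivative f' u) (at u within {0..1})"
    and f'_cont: "continuous_on {0..1} f'"
    and "f 0 = 0" "f 1 = 0"
    and "\<forall>u\<in>{0<..<1}. 0 < f u \<and> f u \<le> f' 0 * u"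
    and f_loc_lip: "\<forall>a b. \<exists>L. L-lipschitz_on {a..b} f"
    and "\<forall>u. u \<notin> {0..1} \<longrightarrow> f u < 0"
    and sub: "subsolution \<alpha> \<beta> d f vl rl"
    and sup: "supersolution \<alpha> \<beta> d f vu ru"
    and "locally_bounded_in_time vl rl" "locally_bounded_in_time vu ru"
    and init_v: "\<forall>j. \<forall>x\<in>{0..1}. vl j 0 x \<le> vu j 0 x"
    and init_rho: "\<forall>j. rl j 0 \<le> ru j 0"
  shows "(\<forall>t>0. \<forall>j. \<forall>x\<in>{0..1}. vl j t x \<le> vu j t x \<and> rl j t \<le> ru j t) \<and>
         ((\<exists>j. \<exists>x\<in>{0..1}. vl j 0 x \<noteq> vu j 0 x) \<or> (\<exists>j. rl j 0 \<noteq> ru j 0) \<longrightarrow>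
           (\<forall>t>0. \<forall>j. \<forall>x\<in>{0..1}. vl j t x < vu j t x \<and> rl j t < ru j t))"
proof -
  define w where "w = (\<lambda>j t x. vu j t x - vl j t x)"
  define r where "r = (\<lambda>j t. ru j t - rl j t)"
  have sys: "\<forall>T>0. \<exists>L M. 0 \<le> L \<and> lattice_robin_super d \<alpha> \<beta> L w r T \<and>
      (\<forall>j. \<forall>t\<in>{0..T}. \<forall>x\<in>{0..1}. \<bar>w j t x\<bar> \<le> M \<and> \<bar>r j t\<bar> \<le> M)"
  proof (intro allI impI)
    fix T :: real assume "0 < T"
    show "\<exists>L M. 0 \<le> L \<and> lattice_robin_super d \<alpha> \<beta> L w r T \<and>
        (\<forall>j. \<forall>t\<in>{0..T}. \<forall>x\<in>{0..1}. \<bar>w j t x\<bar> \<le> M \<and> \<bar>r j t\<bar> \<le> M)"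
      unfolding w_def r_def
      by (rule sub_super_difference_bounded_lattice[OF sub sup assms(13,14) f_loc_lip \<open>0 < T\<close>]) blast
  qed
  have "\<forall>j. (\<forall>x\<in>{0..1}. 0 \<le> w j 0 x) \<and> 0 \<le> r j 0"
    using init_v init_rho by (simp add: w_def r_def)
  with sys have nonneg: "\<forall>j. \<forall>t\<ge>0. (\<forall>x\<in>{0..1}. 0 \<le> w j t x) \<and> 0 \<le> r j t"
    by (rule lattice_robin_super_nonneg[OF assms(1-3)])
  have "\<forall>T>0. \<exists>L. lattice_robin_super d \<alpha> \<beta> L w r T"
    using sys by blast
  note pos = lattice_robin_super_pos[OF assms(1-3) this nonneg]
  show ?thesis
  proof (intro conjI impI allI ballI)
    fix t :: real and j x assume "0 < t" "x \<in> {0..1::real}"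
    then have "(\<forall>x\<in>{0..1}. 0 \<le> w j t x) \<and> 0 \<le> r j t"
      using nonneg less_imp_le by blast
    then show "vl j t x \<le> vu j t x" "rl j t \<le> ru j t"
      using \<open>x \<in> {0..1}\<close> by (simp_all add: w_def r_def)
  next
    assume "(\<exists>j. \<exists>x\<in>{0..1}. vl j 0 x \<noteq> vu j 0 x) \<or> (\<exists>j. rl j 0 \<noteq> ru j 0)"
    then have "(\<exists>j. \<exists>x\<in>{0..1}. w j 0 x \<noteq> 0) \<or> (\<exists>j. r j 0 \<noteq> 0)"
      by (auto simp: w_def r_def)
    fix t :: real and j x assume "0 < t" "x \<in> {0..1::real}"
    then have "(\<forall>x\<in>{0..1}. 0 < w j t x) \<and> 0 < r j t"
      using pos[OF \<open>(\<exists>j. \<exists>x\<in>{0..1}. w j 0 x \<noteq> 0) \<or> (\<exists>j. r j 0 \<noteq> 0)\<close>] by blast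
    then show "vl j t x < vu j t x" "rl j t < ru j t"
      using \<open>x \<in> {0..1}\<close> by (simp_all add: w_def r_def)
  qed
qed

end
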